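(* Let $G\in\mathcal{C}$, let $H$ be a hole of $G$, and let $P=u\text{-}\cdots\text{-}v$ be a path of length at least $1$, vertex-disjoint from $H$, such that $u$ and $v$ both have neighbors in $H$, $u$ and $v$ are nested with respect to $H$, and no internal vertex of $P$ has a neighbor in $H$. Then either $u$ and $v$ have a common neighbor in $H$, or $u$ and $v$ are both pendants of $H$ whose (unique) neighbors in $H$ are adjacent. In particular, if $u$ and $v$ are strictly nested with respect to $H$, then $u$ and $v$ are both pendants of $H$ with adjacent neighbors in $H$.
   Context: All graphs are finite and simple; paths are induced paths; a hole is an induced cycle of length at least four. $\mathcal{C}$ is the class of graphs containing no theta, pyramid, prism or turtle as an induced subgraph, where: a theta consists of two nonadjacent vertices $a,b$ and three paths from $a$ to $b$, otherwise vertex-disjoint, any two of which induce a hole; a pyramid consists of a vertex $a$, a triangle $\{b_1,b_2,b_3\}$ and paths $P_i$ from $a$ to $b_i$, pairwise disjoint except at $a$, any two of which induce a hole; a prism consists of two disjoint triangles $\{a_1,a_2,a_3\},\{b_1,b_2,b_3\}$ and pairwise disjoint paths $P_i$ from $a_i$ to $b_i$, any two of which induce a hole; a turtle consists of disjoint paths $P_1$ (from $a_1$ to $b_1$), $P_2$ (from $a_2$ to $b_2$) with $a_1a_2,b_1b_2$ edges and $V(P_1)\cup V(P_2)$ inducing a hole, plus adjacent vertices $x,y$ where $x$ has at least three neighbors in $P_1$ and none in $P_2$, and $y$ has at least three neighbors in $P_2$ and none in $P_1$. For a hole $H$ and $u\notin V(H)$, $N_H(u)$ is the set of neighbors of $u$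 in $H$; $u$ is a pendant of $H$ if $|N_H(u)|=1$. Two vertices $u,v\notin V(H)$ are nested with respect to $H$ if there exist distinct $a,b\in V(H)$ such that one of the two $a$–$b$ paths of $H$ contains all neighbors of $u$ in $H$ and the other contains all neighbors of $v$ in $H$; they are strictly nested if they are nested and $N_H(u)\cap N_H(v)=\emptyset$. *)

theory Defs
  imports Main
begin

definition graph :: "'a set \<Rightarrow> ('a \<Rightarrow> 'a \<Rightarrow> bool) \<Rightarrow> bool" where
  "graph V E \<longleftrightarrow> finite V \<and> (\<forall>x y. E x y \<longrightarrow> x \<in> V \<and> y \<in> V)
     \<and> (\<forall>x y. E x y \<longrightarrow> E y x) \<and> (\<forall>x. \<not> E x x)"

definition is_path :: "'a set \<Rightarrow> ('a \<Rightarrow> 'a \<Rightarrow> bool) \<Rightarrow> 'a list \<Rightarrow> bool" where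
  "is_path V E p \<longleftrightarrow> p \<noteq> [] \<and> distinct p \<and> set p \<subseteq> V \<and>
     (\<forall>i j. i < length p \<and> j < length p \<longrightarrow> (E (p!i) (p!j) \<longleftrightarrow> (i = j + 1 \<or> j = i + 1)))"

definition is_hole :: "'a set \<Rightarrow> ('a \<Rightarrow> 'a \<Rightarrow> bool) \<Rightarrow> 'a list \<Rightarrow> bool" where
  "is_hole V E cs \<longleftrightarrow> length cs \<ge> 4 \<and> distinct cs \<and> set cs \<subseteq> V \<and>
     (\<forall>i j. i < length cs \<and> j < length cs \<longrightarrow>
        (E (cs!i) (cs!j) \<longleftrightarrow> (j = (i + 1) mod length cs \<or> i = (j + 1) mod length cs)))"

definition hole_set :: "'a set \<Rightarrow> ('a \<Rightarrow> 'a \<Rightarrow> bool) \<Rightarrow> 'a set \<Rightarrow> bool" where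
  "hole_set V E S \<longleftrightarrow> (\<exists>cs. is_hole V E cs \<and> set cs = S)"

definition path_from_to :: "'a set \<Rightarrow> ('a \<Rightarrow> 'a \<Rightarrow> bool) \<Rightarrow> 'a list \<Rightarrow> 'a \<Rightarrow> 'a \<Rightarrow> bool" where
  "path_from_to V E p a b \<longleftrightarrow> is_path V E p \<and> hd p = a \<and> last p = b"

definition nbrs :: "('a \<Rightarrow> 'a \<Rightarrow> bool) \<Rightarrow> 'a set \<Rightarrow> 'a \<Rightarrow> 'a set" where
  "nbrs E S u = {w \<in> S. E u w}"

definition has_theta :: "'a set \<Rightarrow> ('a \<Rightarrow> 'a \<Rightarrow> bool) \<Rightarrow> bool" where
  "has_theta V E \<longleftrightarrow> (\<exists>a b P1 P2 P3. a \<noteq> b \<and> \<not> E a b \<and>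
     path_from_to V E P1 a b \<and> path_from_to V E P2 a b \<and> path_from_to V E P3 a b \<and>
     set P1 \<inter> set P2 = {a, b} \<and> set P1 \<inter> set P3 = {a, b} \<and> set P2 \<inter> set P3 = {a, b} \<and>
     hole_set V E (set P1 \<union> set P2) \<and> hole_set V E (set P1 \<union> set P3) \<and>
     hole_set V E (set P2 \<union> set P3))"

definition has_pyramid :: "'a set \<Rightarrow> ('a \<Rightarrow> 'a \<Rightarrow> bool) \<Rightarrow> bool" where
  "has_pyramid V E \<longleftrightarrow> (\<exists>a b1 b2 b3 P1 P2 P3. E b1 b2 \<and> E b1 b3 \<and> E b2 b3 \<and>
     path_from_to V E P1 a b1 \<and> path_from_to V E P2 a b2 \<and> path_from_to V E P3 a b3 \<and>
     set P1 \<inter> set P2 = {a} \<and> set P1 \<inter> set P3 = {a} \<and> set P2 \<inter> set P3 = {a} \<and>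
     hole_set V E (set P1 \<union> set P2) \<and> hole_set V E (set P1 \<union> set P3) \<and>
     hole_set V E (set P2 \<union> set P3))"

definition has_prism :: "'a set \<Rightarrow> ('a \<Rightarrow> 'a \<Rightarrow> bool) \<Rightarrow> bool" where
  "has_prism V E \<longleftrightarrow> (\<exists>a1 a2 a3 b1 b2 b3 P1 P2 P3.
     E a1 a2 \<and> E a1 a3 \<and> E a2 a3 \<and> E b1 b2 \<and> E b1 b3 \<and> E b2 b3 \<and>
     {a1, a2, a3} \<inter> {b1, b2, b3} = {} \<and>
     path_from_to V E P1 a1 b1 \<and> path_from_to V E P2 a2 b2 \<and> path_from_to V E P3 a3 b3 \<and>
     set P1 \<inter> set P2 = {} \<and> set P1 \<inter> set P3 = {} \<and> set P2 \<inter> set P3 = {} \<and>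
     hole_set V E (set P1 \<union> set P2) \<and> hole_set V E (set P1 \<union> set P3) \<and>
     hole_set V E (set P2 \<union> set P3))"

definition has_turtle :: "'a set \<Rightarrow> ('a \<Rightarrow> 'a \<Rightarrow> bool) \<Rightarrow> bool" where
  "has_turtle V E \<longleftrightarrow> (\<exists>a1 b1 a2 b2 P1 P2 x y.
     path_from_to V E P1 a1 b1 \<and> path_from_to V E P2 a2 b2 \<and> set P1 \<inter> set P2 = {} \<and>
     E a1 a2 \<and> E b1 b2 \<and> hole_set V E (set P1 \<union> set P2) \<and>
     E x y \<and> x \<notin> set P1 \<union> set P2 \<and> y \<notin> set P1 \<union> set P2 \<and>
     card (nbrs E (set P1) x) \<ge> 3 \<and> nbrs E (set P2) x = {} \<and>
     card (nbrs E (set P2) y) \<ge> 3 \<and> nbrs E (set P1) y = {})"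

definition in_C :: "'a set \<Rightarrow> ('a \<Rightarrow> 'a \<Rightarrow> bool) \<Rightarrow> bool" where
  "in_C V E \<longleftrightarrow> graph V E \<and> \<not> has_theta V E \<and> \<not> has_pyramid V E \<and>
     \<not> has_prism V E \<and> \<not> has_turtle V E"

text \<open>Vertex set of the path of hole cs going forward from position i to position j
  (both ends included).\<close>
definition arc :: "'a list \<Rightarrow> nat \<Rightarrow> nat \<Rightarrow> 'a set" where
  "arc cs i j = {cs ! ((i + k) mod length cs) | k. k \<le> (j + length cs - i) mod length cs}"

definition nested :: "('a \<Rightarrow> 'a \<Rightarrow> bool) \<Rightarrow> 'a list \<Rightarrow> 'a \<Rightarrow> 'a \<Rightarrow> bool" where
  "nested E cs u v \<longleftrightarrow> u \<notin> set cs \<and> v \<notin> set cs \<and>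
     (\<exists>i j. i < length cs \<and> j < length cs \<and> i \<noteq> j \<and>
        nbrs E (set cs) u \<subseteq> arc cs i j \<and> nbrs E (set cs) v \<subseteq> arc cs j i)"

definition strictly_nested :: "('a \<Rightarrow> 'a \<Rightarrow> bool) \<Rightarrow> 'a list \<Rightarrow> 'a \<Rightarrow> 'a \<Rightarrow> bool" where
  "strictly_nested E cs u v \<longleftrightarrow> nested E cs u v \<and> nbrs E (set cs) u \<inter> nbrs E (set cs) v = {}"

definition pendant :: "('a \<Rightarrow> 'a \<Rightarrow> bool) \<Rightarrow> 'a list \<Rightarrow> 'a \<Rightarrow> bool" where
  "pendant E cs u \<longleftrightarrow> u \<notin> set cs \<and> card (nbrs E (set cs) u) = 1"

end

theory Submission
  imports Defs
begin

text \<open>Rotate the hole so that the neighbours of \<open>u\<close> lie on an initial arc \<open>C!0 .. C!x2\<close> and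
  those of \<open>v\<close> on a later arc \<open>C!y1 .. C!y2\<close>, each arc having both ends adjacent to its vertex;
  reversing the path if necessary, the arc of \<open>u\<close> is not the longer one. Unless both arcs are
  single adjacent vertices, the path and suitable arcs of the hole form a forbidden configuration:
  if the arc of \<open>u\<close> is a single vertex, a theta, or a pyramid when the arc of \<open>v\<close> is an edge;
  if it is an edge, a prism or a pyramid; if both arcs are longer, a theta, or a turtle when the
  path is a single edge and each end has a third neighbour on the hole.\<close>

definition seg :: "'a list \<Rightarrow> nat \<Rightarrow> nat \<Rightarrow> 'a list" where
  "seg C a b = map ((!) C) [a..<Suc b]"

lemma seg_length [simp]: "length (seg C a b) = Suc b - a"
  by (simp add: seg_def del: upt_Suc)

lemma seg_nth [simp]: "t < Suc b - a \<Longrightarrow> seg C a b ! t = C ! (a + t)"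
  by (simp add: seg_def del: upt_Suc)

lemma set_seg: "set (seg C a b) = (!) C ` {a..b}"
  by (auto simp: seg_def)

lemma seg_not_Nil [simp]: "a \<le> b \<Longrightarrow> seg C a b \<noteq> []"
  by (simp add: seg_def del: upt_Suc)

lemma hd_seg [simp]: "a \<le> b \<Longrightarrow> hd (seg C a b) = C ! a"
  by (simp add: seg_def hd_map del: upt_Suc)

lemma last_seg [simp]: "a \<le> b \<Longrightarrow> last (seg C a b) = C ! b"
  by (simp add: seg_def last_map del: upt_Suc)

lemma ball_set_seg: "(\<forall>w\<in>set (seg C a b). Q w) \<longleftrightarrow> (\<forall>t. a \<le> t \<and> t \<le> b \<longrightarrow> Q (C!t))"
  unfolding set_seg by auto

lemma seg_Cons: "a \<le> b \<Longrightarrow> seg C a b = C!a # seg C (Suc a) b"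
  unfolding seg_def by (simp add: upt_conv_Cons del: upt_Suc)

lemma seg_snoc: "a \<le> Suc b \<Longrightarrow> seg C a (Suc b) = seg C a b @ [C!(Suc b)]"
  unfolding seg_def by simp

lemma seg_Cons_snoc: "a < b \<Longrightarrow> seg C a b = C!a # seg C (Suc a) (b - 1) @ [C!b]"
  using seg_Cons[of a b C] seg_snoc[of "Suc a" "b - 1" C] by simp

section \<open>Induced paths\<close>

lemma graph_sym: "graph V E \<Longrightarrow> E x y \<Longrightarrow> E y x"
  by (simp add: graph_def)

lemma is_path_iff_edges:
  assumes "graph V E"
  shows "is_path V E p \<longleftrightarrow> p \<noteq> [] \<and> distinct p \<and> set p \<subseteq> V \<and>
     (\<forall>i. Suc i < length p \<longrightarrow> E (p!i) (p!Suc i)) \<and>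
     (\<forall>i j. i < length p \<and> j < length p \<and> E (p!i) (p!j) \<longrightarrow> i = j+1 \<or> j = i+1)"
proof -
  have "(\<forall>i j. i < length p \<and> j < length p \<longrightarrow> E (p ! i) (p ! j) = (i = j + 1 \<or> j = i + 1))
     \<longleftrightarrow> (\<forall>i. Suc i < length p \<longrightarrow> E (p!i) (p!Suc i)) \<and>
     (\<forall>i j. i < length p \<and> j < length p \<and> E (p!i) (p!j) \<longrightarrow> i = j+1 \<or> j = i+1)"
    using graph_sym[OF assms] by (metis Suc_eq_plus1 Suc_lessD)
  then show ?thesis unfolding is_path_def by blast
qed

lemma is_path_adj_iff:
  "is_path V E p \<Longrightarrow> i < length p \<Longrightarrow> j < length p \<Longrightarrow> E (p!i) (p!j) \<longleftrightarrow> i = j + 1 \<or> j = i + 1"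
  unfolding is_path_def by blast

lemma is_path_not_Nil: "is_path V E p \<Longrightarrow> p \<noteq> []"
  unfolding is_path_def by blast

lemma is_path_distinct: "is_path V E p \<Longrightarrow> distinct p"
  unfolding is_path_def by blast

lemma is_path_singleton: "graph V E \<Longrightarrow> x \<in> V \<Longrightarrow> is_path V E [x]"
  by (auto simp: is_path_def graph_def)

lemma is_path_append:
  assumes G: "graph V E" and P1: "is_path V E L1" and P2: "is_path V E L2"
    and D: "set L1 \<inter> set L2 = {}" and J: "E (last L1) (hd L2)"
    and X: "\<forall>a\<in>set L1. \<forall>b\<in>set L2. E a b \<longrightarrow> a = last L1 \<and> b = hd L2"
  shows "is_path V E (L1 @ L2)"
proof -
  note P1' = P1[unfolded is_path_iff_edges[OF G]] and P2' = P2[unfolded is_path_iff_edges[OF G]]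
  let ?l = "length L1" and ?m = "length L2"
  have l: "?l > 0" "?m > 0" using P1' P2' by auto
  have lastc: "last L1 = L1 ! (?l - 1)" using P1' last_conv_nth by blast
  have hdc: "hd L2 = L2 ! 0" using P2' hd_conv_nth by blast
  have cross: "i = ?l - 1 \<and> j = ?l" if "i < ?l" "?l \<le> j" "j < ?l + ?m" "E (L1!i) (L2!(j - ?l))" for i j
  proof -
    have "L1!i \<in> set L1" "L2!(j-?l) \<in> set L2" using that by auto
    then have "L1!i = last L1" "L2!(j-?l) = hd L2" using X that(4) by blast+
    then have "i = ?l - 1" "j - ?l = 0" using lastc hdc P1' P2' that nth_eq_iff_index_eq
      by (metis diff_less less_one l(1), metis l(2) less_diff_conv2 add.commute that(2,3))
    then show ?thesis using that by auto
  qed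
  show ?thesis unfolding is_path_iff_edges[OF G]
  proof (intro conjI allI impI)
    show "L1 @ L2 \<noteq> []" using l by auto
    show "distinct (L1 @ L2)" using P1' P2' D by auto
    show "set (L1 @ L2) \<subseteq> V" using P1' P2' by auto
  next
    fix i assume i: "Suc i < length (L1 @ L2)"
    consider "Suc i < ?l" | "Suc i = ?l" | "?l \<le> i" by linarith
    then show "E ((L1 @ L2) ! i) ((L1 @ L2) ! Suc i)"
    proof cases
      case 1 then show ?thesis using P1' by (simp add: nth_append)
    next
      case 2 then have "i = ?l - 1" by simp
      then show ?thesis using J lastc hdc l by (simp add: nth_append)
    next
      case 3 then show ?thesis using P2' i by (simp add: nth_append Suc_diff_le)
    qed
  next
    fix i j assume ij: "i < length (L1 @ L2) \<and> j < length (L1 @ L2) \<and> E ((L1 @ L2) ! i) ((L1 @ L2) ! j)"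
    consider "i < ?l" "j < ?l" | "i < ?l" "?l \<le> j" | "?l \<le> i" "j < ?l" | "?l \<le> i" "?l \<le> j" by linarith
    then show "i = j + 1 \<or> j = i + 1"
    proof cases
      case 1 then show ?thesis using P1' ij by (auto simp: nth_append)
    next
      case 2 then show ?thesis using cross[of i j] ij by (auto simp: nth_append)
    next
      case 3 then show ?thesis using cross[of j i] ij graph_sym[OF G] by (auto simp: nth_append)
    next
      case 4
      have "i - ?l < ?m" "j - ?l < ?m" using ij 4 by auto
      moreover have "E (L2!(i-?l)) (L2!(j-?l))" using ij 4 by (simp add: nth_append)
      ultimately have "i - ?l = j - ?l + 1 \<or> j - ?l = i - ?l + 1"
        using P2' by blast
      then show ?thesis using 4 by linarith
    qed
  qed
qed

lemma is_path_ConsI: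
  assumes "graph V E" "is_path V E L" "x \<in> V" "x \<notin> set L" "E x (hd L)"
    and "\<forall>b\<in>set L. E x b \<longrightarrow> b = hd L"
  shows "is_path V E (x # L)"
  using is_path_append[OF assms(1) is_path_singleton[OF assms(1,3)] assms(2)] assms(4-) by simp

lemma is_path_snocI:
  assumes "graph V E" "is_path V E L" "y \<in> V" "y \<notin> set L" "E (last L) y"
    and "\<forall>a\<in>set L. E a y \<longrightarrow> a = last L"
  shows "is_path V E (L @ [y])"
  using is_path_append[OF assms(1,2) is_path_singleton[OF assms(1,3)]] assms(4-) by simp

lemma is_path_rev:
  assumes G: "graph V E" and P: "is_path V E p"
  shows "is_path V E (rev p)"
proof -
  note P' = P[unfolded is_path_iff_edges[OF G]]
  show ?thesis unfolding is_path_iff_edges[OF G]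
  proof (intro conjI allI impI)
    show "rev p \<noteq> []" "distinct (rev p)" "set (rev p) \<subseteq> V" using P' by auto
  next
    fix i assume i: "Suc i < length (rev p)"
    then have "E (p ! (length p - Suc (Suc i))) (p ! Suc (length p - Suc (Suc i)))"
      using P' by auto
    moreover have "Suc (length p - Suc (Suc i)) = length p - Suc i" using i by auto
    ultimately show "E (rev p ! i) (rev p ! Suc i)" using i graph_sym[OF G] by (auto simp: rev_nth)
  next
    fix i j assume ij: "i < length (rev p) \<and> j < length (rev p) \<and> E (rev p ! i) (rev p ! j)"
    then have "E (p ! (length p - Suc i)) (p ! (length p - Suc j))" by (auto simp: rev_nth)
    moreover have "length p - Suc i < length p" "length p - Suc j < length p" using ij by auto
    ultimately have "length p - Suc i = length p - Suc j + 1 \<or> length p - Suc j = length p - Suc i + 1"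
      using P' by blast
    then show "i = j + 1 \<or> j = i + 1" using ij by auto
  qed
qed

lemma is_path_appendD1:
  assumes "is_path V E (xs @ ys)" "xs \<noteq> []"
  shows "is_path V E xs"
  unfolding is_path_def
proof (intro conjI allI impI)
  show "xs \<noteq> []" "distinct xs" "set xs \<subseteq> V" using assms by (auto simp: is_path_def)
next
  fix i j assume ij: "i < length xs \<and> j < length xs"
  then show "E (xs ! i) (xs ! j) = (i = j + 1 \<or> j = i + 1)"
    using is_path_adj_iff[OF assms(1), of i j] by (simp add: nth_append)
qed

lemma is_path_appendD2:
  assumes "is_path V E (xs @ ys)" "ys \<noteq> []"
  shows "is_path V E ys"
  unfolding is_path_def
proof (intro conjI allI impI)
  show "ys \<noteq> []" "distinct ys" "set ys \<subseteq> V" using assms by (auto simp: is_path_def)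
next
  fix i j assume ij: "i < length ys \<and> j < length ys"
  then show "E (ys ! i) (ys ! j) = (i = j + 1 \<or> j = i + 1)"
    using is_path_adj_iff[OF assms(1), of "length xs + i" "length xs + j"] by simp
qed

lemma is_path_middle: "is_path V E (x # M @ [y]) \<Longrightarrow> M \<noteq> [] \<Longrightarrow> is_path V E M"
  using is_path_appendD1[of V E "x # M" "[y]"] is_path_appendD2[of V E "[x]" M] by simp

lemma is_path_Cons_nbr:
  assumes P: "is_path V E (x # L)" and b: "b \<in> set L" and e: "E x b"
  shows "b = hd L"
proof -
  obtain k where k: "k < length L" "b = L ! k" using b by (metis in_set_conv_nth)
  then have "k = 0" using is_path_adj_iff[OF P, of 0 "Suc k"] e by simp
  then show ?thesis using k by (simp add: hd_conv_nth)
qed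

lemma is_path_Cons_adj: "is_path V E (x # L) \<Longrightarrow> L \<noteq> [] \<Longrightarrow> E x (hd L)"
  using is_path_adj_iff[of V E "x # L" 0 1] by (simp add: hd_conv_nth)

lemma is_path_snoc_nbr:
  assumes "graph V E" "is_path V E (L @ [y])" "b \<in> set L" "E y b"
  shows "b = last L"
  using is_path_Cons_nbr[of V E y "rev L" b] is_path_rev[OF assms(1,2)] assms(3,4)
  by (simp add: hd_rev)

lemma is_path_snoc_adj:
  assumes "graph V E" "is_path V E (L @ [y])" "L \<noteq> []"
  shows "E y (last L)"
  using is_path_Cons_adj[of V E y "rev L"] is_path_rev[OF assms(1,2)] assms(3)
  by (simp add: hd_rev)


section \<open>Holes\<close>

lemma Suc_mod_if: "i < n \<Longrightarrow> Suc i mod n = (if Suc i = n then 0 else Suc i)"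
  by (cases "Suc i = n") auto

lemma hole_adj_iff_mod:
  fixes n :: nat
  assumes "4 \<le> n" "i < n" "j < n"
  shows "(j = (i + 1) mod n \<or> i = (j + 1) mod n) \<longleftrightarrow>
    (i = j + 1 \<or> j = i + 1 \<or> (i = 0 \<and> j = n - 1) \<or> (j = 0 \<and> i = n - 1))"
  using assms Suc_mod_if[of i n] Suc_mod_if[of j n]
  by (cases "Suc i = n"; cases "Suc j = n"; simp; linarith)

lemma hole_adj_iff:
  assumes "is_hole V E C" "i < length C" "j < length C"
  shows "E (C!i) (C!j) \<longleftrightarrow>
    (i = j + 1 \<or> j = i + 1 \<or> (i = 0 \<and> j = length C - 1) \<or> (j = 0 \<and> i = length C - 1))"
  using assms hole_adj_iff_mod[of "length C" i j] unfolding is_hole_def by blast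

lemma is_holeI:
  assumes G: "graph V E" and L: "4 \<le> length p" and "distinct p" "set p \<subseteq> V"
    and step: "\<And>i. Suc i < length p \<Longrightarrow> E (p!i) (p!Suc i)"
    and close: "E (p!0) (p!(length p - 1))"
    and non: "\<And>i j. i < length p \<Longrightarrow> j < length p \<Longrightarrow> E (p!i) (p!j) \<Longrightarrow>
      i = j + 1 \<or> j = i + 1 \<or> (i = 0 \<and> j = length p - 1) \<or> (j = 0 \<and> i = length p - 1)"
  shows "is_hole V E p"
  unfolding is_hole_def
proof (intro conjI allI impI)
  fix i j assume ij: "i < length p \<and> j < length p"
  have "E (p!i) (p!j)" if "i = j + 1 \<or> j = i + 1 \<or> (i = 0 \<and> j = length p - 1) \<or> (j = 0 \<and> i = length p - 1)"
    using that step[of i] step[of j] close graph_sym[OF G] ij by (metis Suc_eq_plus1)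
  then show "E (p!i) (p!j) \<longleftrightarrow> (j = (i + 1) mod length p \<or> i = (j + 1) mod length p)"
    using non[of i j] ij hole_adj_iff_mod[OF L, of i j] by blast
qed (use assms in auto)

lemma is_hole_append:
  assumes G: "graph V E" and P1: "is_path V E L1" and P2: "is_path V E L2"
    and D: "set L1 \<inter> set L2 = {}" and L: "length L1 + length L2 \<ge> 4"
    and J: "E (last L1) (hd L2)" and J2: "E (hd L1) (last L2)"
    and X: "\<forall>a\<in>set L1. \<forall>b\<in>set L2. E a b \<longrightarrow> (a = last L1 \<and> b = hd L2) \<or> (a = hd L1 \<and> b = last L2)"
  shows "is_hole V E (L1 @ L2)"
proof -
  note P1' = P1[unfolded is_path_iff_edges[OF G]] and P2' = P2[unfolded is_path_iff_edges[OF G]]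
  let ?l = "length L1" and ?m = "length L2"
  have l: "?l > 0" "?m > 0" using P1' P2' by auto
  have ends: "last L1 = L1 ! (?l - 1)" "hd L2 = L2 ! 0" "last L2 = L2 ! (?m - 1)" "hd L1 = L1 ! 0"
    using P1' P2' by (simp_all add: last_conv_nth hd_conv_nth)
  have cross: "(i = ?l - 1 \<and> j = ?l) \<or> (i = 0 \<and> j = ?l + ?m - 1)"
    if "i < ?l" "?l \<le> j" "j < ?l + ?m" "E (L1!i) (L2!(j - ?l))" for i j
  proof -
    have "L1!i \<in> set L1" "L2!(j-?l) \<in> set L2" using that by auto
    then have "(L1!i = last L1 \<and> L2!(j-?l) = hd L2) \<or> (L1!i = hd L1 \<and> L2!(j-?l) = last L2)"
      using X that(4) by blast
    moreover have "j - ?l < ?m" using that by linarith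
    ultimately have "(i = ?l - 1 \<and> j - ?l = 0) \<or> (i = 0 \<and> j - ?l = ?m - 1)"
      using ends P1' P2' that nth_eq_iff_index_eq l by (metis diff_less less_one)
    then show ?thesis using that by auto
  qed
  show ?thesis
  proof (rule is_holeI[OF G])
    show "4 \<le> length (L1 @ L2)" using L by simp
    show "distinct (L1 @ L2)" using P1' P2' D by auto
    show "set (L1 @ L2) \<subseteq> V" using P1' P2' by auto
    have "\<not> (?l + ?m - 1 < ?l)" "?l + ?m - 1 - ?l = ?m - 1" using l by linarith+
    then show "E ((L1 @ L2) ! 0) ((L1 @ L2) ! (length (L1 @ L2) - 1))"
      using J2 ends l by (simp add: nth_append)
  next
    fix i assume i: "Suc i < length (L1 @ L2)"
    consider "Suc i < ?l" | "Suc i = ?l" | "?l \<le> i" by linarith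
    then show "E ((L1 @ L2) ! i) ((L1 @ L2) ! Suc i)"
    proof cases
      case 1 then show ?thesis using P1' by (simp add: nth_append)
    next
      case 2 then have "i = ?l - 1" by simp
      then show ?thesis using J ends l by (simp add: nth_append)
    next
      case 3 then show ?thesis using P2' i by (simp add: nth_append Suc_diff_le)
    qed
  next
    fix i j assume ij: "i < length (L1 @ L2)" "j < length (L1 @ L2)" "E ((L1 @ L2) ! i) ((L1 @ L2) ! j)"
    consider "i < ?l" "j < ?l" | "i < ?l" "?l \<le> j" | "?l \<le> i" "j < ?l" | "?l \<le> i" "?l \<le> j" by linarith
    then show "i = j + 1 \<or> j = i + 1 \<or> (i = 0 \<and> j = length (L1 @ L2) - 1) \<or> (j = 0 \<and> i = length (L1 @ L2) - 1)"
    proof cases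
      case 1 then show ?thesis using P1' ij by (auto simp: nth_append)
    next
      case 2 then show ?thesis using cross[of i j] ij by (auto simp: nth_append)
    next
      case 3 then show ?thesis using cross[of j i] ij graph_sym[OF G] by (auto simp: nth_append)
    next
      case 4
      have "i - ?l < ?m" "j - ?l < ?m" using ij 4 by auto
      moreover have "E (L2!(i-?l)) (L2!(j-?l))" using ij 4 by (simp add: nth_append)
      ultimately have "i - ?l = j - ?l + 1 \<or> j - ?l = i - ?l + 1"
        using P2' by blast
      then show ?thesis using 4 by linarith
    qed
  qed
qed

lemma hole_set_append:
  assumes "graph V E" "is_path V E L1" "is_path V E L2" "set L1 \<inter> set L2 = {}"
    "length L1 + length L2 \<ge> 4" "E (last L1) (hd L2)" "E (hd L1) (last L2)"
    "\<forall>a\<in>set L1. \<forall>b\<in>set L2. E a b \<longrightarrow> (a = last L1 \<and> b = hd L2) \<or> (a = hd L1 \<and> b = last L2)"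
  shows "hole_set V E (set L1 \<union> set L2)"
  unfolding hole_set_def using is_hole_append[OF assms] by (metis set_append)

lemma is_path_seg:
  assumes G: "graph V E" and H: "is_hole V E C" and ab: "a \<le> b" "b < length C"
    and not_all: "\<not> (a = 0 \<and> b = length C - 1)"
  shows "is_path V E (seg C a b)"
proof -
  have dC: "distinct C" "set C \<subseteq> V" using H unfolding is_hole_def by blast+
  show ?thesis unfolding is_path_iff_edges[OF G]
  proof (intro conjI allI impI)
    show "seg C a b \<noteq> []" using ab by simp
    have "inj_on ((!) C) {a..<Suc b}" using inj_on_nth[OF dC(1), of "{a..<Suc b}"] ab by auto
    then show "distinct (seg C a b)" unfolding seg_def
      by (simp add: distinct_map del: upt_Suc)
    show "set (seg C a b) \<subseteq> V" unfolding set_seg using dC ab by auto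
  next
    fix i assume i: "Suc i < length (seg C a b)"
    then have "E (C!(a+i)) (C!(a + Suc i))"
      using hole_adj_iff[OF H, of "a+i" "a + Suc i"] ab by simp
    then show "E (seg C a b ! i) (seg C a b ! Suc i)" using i by simp
  next
    fix i j assume ij: "i < length (seg C a b) \<and> j < length (seg C a b) \<and> E (seg C a b ! i) (seg C a b ! j)"
    then have "E (C!(a+i)) (C!(a+j))" by auto
    moreover have l: "a + i < length C" "a + j < length C" "a + i \<le> b" "a + j \<le> b" using ij ab by auto
    ultimately show "i = j + 1 \<or> j = i + 1"
      using hole_adj_iff[OF H l(1,2)] not_all ab by linarith
  qed
qed

lemma add_mod_cancel_left:
  fixes a b n :: nat
  assumes "a < n" "b < n" "(k + a) mod n = (k + b) mod n"
  shows "a = b"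
proof -
  have "a = b" if "(k + a) mod n = (k + b) mod n" "a \<le> b" "b < n" for a b
  proof -
    have "n dvd b - a" using mod_eq_dvd_iff_nat[of "k+a" "k+b" n] that by simp
    moreover have "b - a < n" using that by simp
    ultimately show "a = b" using that by (metis dvd_imp_le le_antisym not_less diff_is_0_eq zero_less_diff)
  qed
  then show ?thesis using assms by (metis nat_le_linear)
qed

lemma is_hole_rotate:
  assumes H: "is_hole V E C"
  shows "is_hole V E (rotate k C)"
  unfolding is_hole_def
proof (intro conjI allI impI)
  let ?n = "length C"
  have H': "length C \<ge> 4" "distinct C" "set C \<subseteq> V"
    "\<forall>i j. i < ?n \<and> j < ?n \<longrightarrow> (E (C!i) (C!j) \<longleftrightarrow> (j = (i + 1) mod ?n \<or> i = (j + 1) mod ?n))"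
    using H unfolding is_hole_def by blast+
  show "4 \<le> length (rotate k C)" "distinct (rotate k C)" "set (rotate k C) \<subseteq> V" using H' by auto
  fix i j assume ij: "i < length (rotate k C) \<and> j < length (rotate k C)"
  then have ij': "i < ?n" "j < ?n" by auto
  have n0: "?n > 0" using H' by auto
  have "E (rotate k C ! i) (rotate k C ! j) = E (C ! ((k + i) mod ?n)) (C ! ((k + j) mod ?n))"
    using ij' by (simp add: nth_rotate)
  also have "\<dots> = ((k + j) mod ?n = ((k + i) mod ?n + 1) mod ?n \<or> (k + i) mod ?n = ((k + j) mod ?n + 1) mod ?n)"
    using H'(4) n0 by simp
  also have "\<dots> = ((k + j) mod ?n = (k + (i + 1) mod ?n) mod ?n \<or> (k + i) mod ?n = (k + (j + 1) mod ?n) mod ?n)"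
    by (simp add: mod_simps add.assoc)
  also have "\<dots> = (j = (i + 1) mod ?n \<or> i = (j + 1) mod ?n)"
    using add_mod_cancel_left[OF ij'(2), of "(i+1) mod ?n" k] add_mod_cancel_left[OF ij'(1), of "(j+1) mod ?n" k] n0
    by auto
  finally show "E (rotate k C ! i) (rotate k C ! j) = (j = (i + 1) mod length (rotate k C) \<or> i = (j + 1) mod length (rotate k C))"
    by simp
qed

section \<open>Recognising the forbidden configurations\<close>

lemma hole_set_two_paths:
  assumes G: "graph V E" and Q1: "is_path V E Q1" and Q2: "is_path V E Q2"
    and D: "set Q1 \<inter> set Q2 = {}" and L: "length Q1 + length Q2 \<ge> 4"
    and "E (hd Q1) (hd Q2)" "E (last Q1) (last Q2)"
    and X: "\<forall>p\<in>set Q1. \<forall>q\<in>set Q2. E p q \<longrightarrow> (p = hd Q1 \<and> q = hd Q2) \<or> (p = last Q1 \<and> q = last Q2)"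
  shows "hole_set V E (set Q1 \<union> set Q2)"
proof -
  have "hole_set V E (set Q1 \<union> set (rev Q2))"
    by (rule hole_set_append[OF G Q1 is_path_rev[OF G Q2]])
      (use assms is_path_not_Nil[OF Q2] in \<open>auto simp: hd_rev last_rev\<close>)
  then show ?thesis by simp
qed

lemma has_thetaI:
  assumes G: "graph V E" and nab: "\<not> E a b"
    and Q1: "is_path V E (a # M1 @ [b])" and Q2: "is_path V E (a # M2 @ [b])"
    and Q3: "is_path V E (a # M3 @ [b])"
    and ne: "M1 \<noteq> []" "M2 \<noteq> []" "M3 \<noteq> []"
    and D: "set M1 \<inter> set M2 = {}" "set M1 \<inter> set M3 = {}" "set M2 \<inter> set M3 = {}"
    and X12: "\<forall>p\<in>set M1. \<forall>q\<in>set M2. \<not> E p q"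
    and X13: "\<forall>p\<in>set M1. \<forall>q\<in>set M3. \<not> E p q"
    and X23: "\<forall>p\<in>set M2. \<forall>q\<in>set M3. \<not> E p q"
  shows "has_theta V E"
proof -
  have ab: "a \<noteq> b" using is_path_distinct[OF Q1] by auto
  have nin: "a \<notin> set M1" "b \<notin> set M1" "a \<notin> set M2" "b \<notin> set M2" "a \<notin> set M3" "b \<notin> set M3"
    using is_path_distinct[OF Q1] is_path_distinct[OF Q2] is_path_distinct[OF Q3] by auto
  have hole: "hole_set V E (set (a # Mi @ [b]) \<union> set (a # Mj @ [b]))"
    if Qi: "is_path V E (a # Mi @ [b])" and Qj: "is_path V E (a # Mj @ [b])"
      and "Mi \<noteq> []" and "Mj \<noteq> []" and "set Mi \<inter> set Mj = {}" and "\<forall>p\<in>set Mi. \<forall>q\<in>set Mj. \<not> E p q"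
      and "a \<notin> set Mj" "b \<notin> set Mj"
    for Mi Mj
  proof -
    have Qj1: "is_path V E (a # Mj)" using is_path_appendD1[of V E "a # Mj" "[b]"] Qj by simp
    have Qj2: "is_path V E (Mj @ [b])" using is_path_appendD2[of V E "[a]" "Mj @ [b]"] Qj by simp
    have "hole_set V E (set (a # Mi @ [b]) \<union> set Mj)"
    proof (rule hole_set_two_paths[OF G Qi is_path_middle[OF Qj \<open>Mj \<noteq> []\<close>]])
      show "4 \<le> length (a # Mi @ [b]) + length Mj" using that(3,4) by (cases Mi; cases Mj) auto
      show "E (hd (a # Mi @ [b])) (hd Mj)" using is_path_Cons_adj[OF Qj1 \<open>Mj \<noteq> []\<close>] by simp
      show "E (last (a # Mi @ [b])) (last Mj)"
        using is_path_snoc_adj[OF G Qj2 \<open>Mj \<noteq> []\<close>] graph_sym[OF G] by simp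
      show "\<forall>p\<in>set (a # Mi @ [b]). \<forall>q\<in>set Mj. E p q \<longrightarrow>
          p = hd (a # Mi @ [b]) \<and> q = hd Mj \<or> p = last (a # Mi @ [b]) \<and> q = last Mj"
        using that is_path_Cons_nbr[OF Qj1] is_path_snoc_nbr[OF G Qj2] by auto
    qed (use that in auto)
    moreover have "set (a # Mi @ [b]) \<union> set (a # Mj @ [b]) = set (a # Mi @ [b]) \<union> set Mj" by auto
    ultimately show ?thesis by simp
  qed
  show ?thesis unfolding has_theta_def
  proof (intro exI conjI)
    show "hole_set V E (set (a # M1 @ [b]) \<union> set (a # M2 @ [b]))"
      by (rule hole[OF Q1 Q2]) (use ne D X12 nin in auto)
    show "hole_set V E (set (a # M1 @ [b]) \<union> set (a # M3 @ [b]))"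
      by (rule hole[OF Q1 Q3]) (use ne D X13 nin in auto)
    show "hole_set V E (set (a # M2 @ [b]) \<union> set (a # M3 @ [b]))"
      by (rule hole[OF Q2 Q3]) (use ne D X23 nin in auto)
  qed (use ab nab Q1 Q2 Q3 D nin in \<open>auto simp: path_from_to_def\<close>)
qed

lemma has_pyramidI:
  assumes G: "graph V E"
    and Q1: "is_path V E (a # R1)" and Q2: "is_path V E (a # R2)" and Q3: "is_path V E (a # R3)"
    and ne: "R1 \<noteq> []" "R2 \<noteq> []" "R3 \<noteq> []"
    and T: "E (last R1) (last R2)" "E (last R1) (last R3)" "E (last R2) (last R3)"
    and D: "set R1 \<inter> set R2 = {}" "set R1 \<inter> set R3 = {}" "set R2 \<inter> set R3 = {}"
    and X12: "\<forall>p\<in>set R1. \<forall>q\<in>set R2. E p q \<longrightarrow> p = last R1 \<and> q = last R2"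
    and X13: "\<forall>p\<in>set R1. \<forall>q\<in>set R3. E p q \<longrightarrow> p = last R1 \<and> q = last R3"
    and X23: "\<forall>p\<in>set R2. \<forall>q\<in>set R3. E p q \<longrightarrow> p = last R2 \<and> q = last R3"
    and L: "length R1 + length R2 \<ge> 3" "length R1 + length R3 \<ge> 3" "length R2 + length R3 \<ge> 3"
  shows "has_pyramid V E"
proof -
  have nin: "a \<notin> set R1" "a \<notin> set R2" "a \<notin> set R3"
    using is_path_distinct[OF Q1] is_path_distinct[OF Q2] is_path_distinct[OF Q3] by auto
  have hole: "hole_set V E (set (a # Ri) \<union> set (a # Rj))"
    if Qi: "is_path V E (a # Ri)" and Qj: "is_path V E (a # Rj)"
      and "Ri \<noteq> []" and "Rj \<noteq> []" and "set Ri \<inter> set Rj = {}"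
      and "\<forall>p\<in>set Ri. \<forall>q\<in>set Rj. E p q \<longrightarrow> p = last Ri \<and> q = last Rj"
      and "E (last Ri) (last Rj)" and "length Ri + length Rj \<ge> 3" and "a \<notin> set Rj"
    for Ri Rj
  proof -
    have "hole_set V E (set (a # Ri) \<union> set Rj)"
    proof (rule hole_set_two_paths[OF G Qi is_path_appendD2[of V E "[a]" Rj]])
      show "\<forall>p\<in>set (a # Ri). \<forall>q\<in>set Rj. E p q \<longrightarrow>
          p = hd (a # Ri) \<and> q = hd Rj \<or> p = last (a # Ri) \<and> q = last Rj"
        using that is_path_Cons_nbr[OF Qj] by auto
    qed (use that is_path_Cons_adj[OF Qj] in auto)
    moreover have "set (a # Ri) \<union> set (a # Rj) = set (a # Ri) \<union> set Rj" by auto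
    ultimately show ?thesis by simp
  qed
  show ?thesis unfolding has_pyramid_def
  proof (intro exI conjI)
    show "hole_set V E (set (a # R1) \<union> set (a # R2))" by (rule hole[OF Q1 Q2]) (use assms nin in auto)
    show "hole_set V E (set (a # R1) \<union> set (a # R3))" by (rule hole[OF Q1 Q3]) (use assms nin in auto)
    show "hole_set V E (set (a # R2) \<union> set (a # R3))" by (rule hole[OF Q2 Q3]) (use assms nin in auto)
  qed (use T Q1 Q2 Q3 ne D nin in \<open>auto simp: path_from_to_def\<close>)
qed

lemma has_prismI:
  assumes G: "graph V E"
    and Q1: "is_path V E Q1" and Q2: "is_path V E Q2" and Q3: "is_path V E Q3"
    and TA: "E (hd Q1) (hd Q2)" "E (hd Q1) (hd Q3)" "E (hd Q2) (hd Q3)"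
    and TB: "E (last Q1) (last Q2)" "E (last Q1) (last Q3)" "E (last Q2) (last Q3)"
    and AB: "{hd Q1, hd Q2, hd Q3} \<inter> {last Q1, last Q2, last Q3} = {}"
    and D: "set Q1 \<inter> set Q2 = {}" "set Q1 \<inter> set Q3 = {}" "set Q2 \<inter> set Q3 = {}"
    and X12: "\<forall>p\<in>set Q1. \<forall>q\<in>set Q2. E p q \<longrightarrow> (p = hd Q1 \<and> q = hd Q2) \<or> (p = last Q1 \<and> q = last Q2)"
    and X13: "\<forall>p\<in>set Q1. \<forall>q\<in>set Q3. E p q \<longrightarrow> (p = hd Q1 \<and> q = hd Q3) \<or> (p = last Q1 \<and> q = last Q3)"
    and X23: "\<forall>p\<in>set Q2. \<forall>q\<in>set Q3. E p q \<longrightarrow> (p = hd Q2 \<and> q = hd Q3) \<or> (p = last Q2 \<and> q = last Q3)"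
  shows "has_prism V E"
proof -
  have "2 \<le> length Q" if "is_path V E Q" "hd Q \<noteq> last Q" for Q
    using that is_path_not_Nil[OF that(1)] by (cases Q) (auto split: if_splits simp: Suc_le_eq)
  then have l: "2 \<le> length Q1" "2 \<le> length Q2" "2 \<le> length Q3" using Q1 Q2 Q3 AB by blast+
  show ?thesis unfolding has_prism_def
  proof (intro exI conjI)
    show "hole_set V E (set Q1 \<union> set Q2)" by (rule hole_set_two_paths[OF G Q1 Q2 D(1)]) (use l TA TB X12 in auto)
    show "hole_set V E (set Q1 \<union> set Q3)" by (rule hole_set_two_paths[OF G Q1 Q3 D(2)]) (use l TA TB X13 in auto)
    show "hole_set V E (set Q2 \<union> set Q3)" by (rule hole_set_two_paths[OF G Q2 Q3 D(3)]) (use l TA TB X23 in auto)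
  qed (use assms in \<open>auto simp: path_from_to_def\<close>)
qed

lemma three_le_card: "finite S \<Longrightarrow> {a, b, c} \<subseteq> S \<Longrightarrow> a \<noteq> b \<Longrightarrow> a \<noteq> c \<Longrightarrow> b \<noteq> c \<Longrightarrow> 3 \<le> card S"
  using card_mono[of S "{a, b, c}"] by simp

locale graph_hole =
  fixes V :: "'a set" and E :: "'a \<Rightarrow> 'a \<Rightarrow> bool" and C :: "'a list"
  assumes graph: "graph V E" and hole: "is_hole V E C"
begin

abbreviation "n \<equiv> length C"

lemma E_sym: "E x y \<Longrightarrow> E y x"
  using graph graph_sym by metis

lemma length_ge_4: "n \<ge> 4"
  using hole unfolding is_hole_def by blast

lemma C_not_Nil [simp]: "C \<noteq> []"
  using length_ge_4 by auto

lemma distinct_C: "distinct C"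
  using hole unfolding is_hole_def by blast

lemma nth_in_V: "t < n \<Longrightarrow> C!t \<in> V"
  using hole unfolding is_hole_def by auto

lemma nth_eq_iff: "s < n \<Longrightarrow> t < n \<Longrightarrow> C!s = C!t \<longleftrightarrow> s = t"
  using distinct_C nth_eq_iff_index_eq by blast

lemma nth_in_seg_iff: "b < n \<Longrightarrow> t < n \<Longrightarrow> C!t \<in> set (seg C a b) \<longleftrightarrow> a \<le> t \<and> t \<le> b"
  unfolding set_seg using nth_eq_iff by auto

lemma hole_edgeD: "s < n \<Longrightarrow> t < n \<Longrightarrow> E (C!s) (C!t) \<Longrightarrow>
    s = t+1 \<or> t = s+1 \<or> (s = 0 \<and> t = n-1) \<or> (t = 0 \<and> s = n-1)"
  using hole_adj_iff[OF hole] by blast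

lemma hole_edgeI: "s < n \<Longrightarrow> t < n \<Longrightarrow> (s = t+1 \<or> t = s+1 \<or> (s = 0 \<and> t = n-1) \<or> (t = 0 \<and> s = n-1))
   \<Longrightarrow> E (C!s) (C!t)"
  using hole_adj_iff[OF hole] by blast

lemma hole_non_edge: "s < n \<Longrightarrow> t < n \<Longrightarrow> \<not>(s = t+1 \<or> t = s+1 \<or> (s = 0 \<and> t = n-1) \<or> (t = 0 \<and> s = n-1))
   \<Longrightarrow> \<not> E (C!s) (C!t)"
  using hole_edgeD by blast

lemma seg_disjoint: "b < c \<Longrightarrow> d < n \<Longrightarrow> set (seg C a b) \<inter> set (seg C c d) = {}"
  unfolding set_seg using distinct_C by (auto simp: nth_eq_iff_index_eq)

lemma set_seg_subset: "b < n \<Longrightarrow> set (seg C a b) \<subseteq> set C"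
  unfolding set_seg by auto

lemma set_seg_split:
  assumes "b < n - 1"
  shows "set (seg C 0 b) \<union> set (seg C (Suc b) (n - 1)) = set C"
proof
  show "set (seg C 0 b) \<union> set (seg C (Suc b) (n - 1)) \<subseteq> set C"
    using set_seg_subset assms by auto
  show "set C \<subseteq> set (seg C 0 b) \<union> set (seg C (Suc b) (n - 1))"
  proof
    fix x assume "x \<in> set C"
    then obtain t where "t < n" "x = C!t" by (metis in_set_conv_nth)
    then show "x \<in> set (seg C 0 b) \<union> set (seg C (Suc b) (n - 1))"
      using nth_in_seg_iff[of b t 0] nth_in_seg_iff[of "n - 1" t "Suc b"] assms by auto
  qed
qed

lemma no_edge_between_segs:
  assumes "Suc b < c" "d < n" "\<not> (a = 0 \<and> d = n - 1)"
  shows "\<forall>p\<in>set (seg C a b). \<forall>q\<in>set (seg C c d). \<not> E p q"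
  unfolding ball_set_seg
proof (intro allI impI)
  fix s t assume "a \<le> s \<and> s \<le> b" "c \<le> t \<and> t \<le> d"
  then show "\<not> E (C!s) (C!t)" by (intro hole_non_edge) (use assms in auto)
qed

lemma is_path_wrap_seg: "2 \<le> y \<Longrightarrow> y < n \<Longrightarrow> is_path V E (seg C y (n-1) @ [C!0])"
proof (rule is_path_snocI[OF graph is_path_seg[OF graph hole]])
  assume y: "2 \<le> y" "y < n"
  show "y \<le> n - 1" "n - 1 < n" "\<not> (y = 0 \<and> n - 1 = n - 1)" using y by auto
  show "C!0 \<in> V" using nth_in_V[of 0] length_ge_4 by linarith
  show "C!0 \<notin> set (seg C y (n-1))" using y length_ge_4 by (simp add: nth_in_seg_iff)
  show "E (last (seg C y (n - 1))) (C ! 0)" using y length_ge_4 hole_edgeI[of "n-1" 0] by simp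
  show "\<forall>a\<in>set (seg C y (n - 1)). E a (C ! 0) \<longrightarrow> a = last (seg C y (n - 1))"
    unfolding ball_set_seg
  proof (intro allI impI)
    fix t assume t: "y \<le> t \<and> t \<le> n - 1" and e: "E (C!t) (C!0)"
    have "t = n - 1" using hole_edgeD[of t 0] e t y length_ge_4 by auto
    then show "C!t = last (seg C y (n-1))" using t by simp
  qed
qed

lemma nbrs_conv_nth: "nbrs E (set C) w = (!) C ` {t. t < n \<and> E w (C!t)}"
  unfolding nbrs_def by (auto simp: in_set_conv_nth)

lemma nbrs_eq_nth_pair:
  assumes "\<forall>t<n. E w (C!t) \<longrightarrow> t = i \<or> t = j" "E w (C!i)" "E w (C!j)" "i < n" "j < n"
  shows "nbrs E (set C) w = {C!i, C!j}"
  using assms unfolding nbrs_def by (auto simp: in_set_conv_nth)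

lemma is_path_through:
  assumes w: "w \<in> V" "w \<notin> set C" and ab: "a < n" "b < n" "a \<noteq> b"
    and e: "E w (C!a)" "E w (C!b)" and nab: "\<not> E (C!a) (C!b)"
  shows "is_path V E [C!a, w, C!b]"
proof -
  have wb: "is_path V E ([w] @ [C!b])"
    by (rule is_path_append[OF graph is_path_singleton[OF graph w(1)] is_path_singleton[OF graph nth_in_V[OF ab(2)]]])
      (use w ab e in auto)
  have "is_path V E ([C!a] @ ([w] @ [C!b]))"
    by (rule is_path_append[OF graph is_path_singleton[OF graph nth_in_V[OF ab(1)]] wb])
      (use w ab nth_eq_iff e nab E_sym in auto)
  then show ?thesis by simp
qed

lemma theta_if_two_nbrs_at_0:
  assumes w: "w \<in> V" "w \<notin> set C" and nb: "\<forall>t<n. E w (C!t) \<longrightarrow> t = 0 \<or> t = k"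
    and e: "E w (C!0)" "E w (C!k)" and k: "2 \<le> k" "k \<le> n - 2"
  shows "has_theta V E"
proof -
  have k': "k < n" "0 < n" using k length_ge_4 by auto
  have nab: "\<not> E (C!0) (C!k)" by (rule hole_non_edge) (use k length_ge_4 in auto)
  have Q1: "is_path V E (C!0 # [w] @ [C!k])" using is_path_through[OF w k'(2) k'(1) _ e nab] k by simp
  have Q2: "is_path V E (C!0 # seg C 1 (k-1) @ [C!k])"
    using is_path_seg[OF graph hole, of 0 k] seg_Cons_snoc[of 0 k C] k k' length_ge_4 by simp
  have "C!0 # rev (seg C (Suc k) (n-1)) @ [C!k] = rev (seg C k (n-1) @ [C!0])"
    using seg_Cons[of k "n-1" C] k by simp
  then have Q3: "is_path V E (C!0 # rev (seg C (Suc k) (n-1)) @ [C!k])"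
    using is_path_rev[OF graph is_path_wrap_seg[of k]] k by simp
  show ?thesis
  proof (rule has_thetaI[OF graph nab Q1 Q2 Q3])
    show "set [w] \<inter> set (seg C 1 (k - 1)) = {}" "set [w] \<inter> set (rev (seg C (Suc k) (n - 1))) = {}"
      using w k by (auto simp: set_seg)
    show "set (seg C 1 (k - 1)) \<inter> set (rev (seg C (Suc k) (n - 1))) = {}" using seg_disjoint k by simp
    have nw: "\<not> E w (C!t)" if "t < n" "t \<noteq> 0" "t \<noteq> k" for t using nb that by blast
    show "\<forall>p\<in>set [w]. \<forall>q\<in>set (seg C 1 (k - 1)). \<not> E p q"
      unfolding ball_set_seg
    proof (intro ballI allI impI)
      fix p t assume "p \<in> set [w]" "1 \<le> t \<and> t \<le> k - 1"
      moreover have "t < n" "t \<noteq> 0" "t \<noteq> k" using \<open>1 \<le> t \<and> t \<le> k - 1\<close> k' by auto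
      ultimately show "\<not> E p (C!t)" using nw[of t] by auto
    qed
    show "\<forall>p\<in>set [w]. \<forall>q\<in>set (rev (seg C (Suc k) (n - 1))). \<not> E p q"
      unfolding set_rev ball_set_seg
    proof (intro ballI allI impI)
      fix p t assume "p \<in> set [w]" "Suc k \<le> t \<and> t \<le> n - 1"
      moreover have "t < n" "t \<noteq> 0" "t \<noteq> k" using \<open>Suc k \<le> t \<and> t \<le> n - 1\<close> k' by auto
      ultimately show "\<not> E p (C!t)" using nw[of t] by auto
    qed
    show "\<forall>p\<in>set (seg C 1 (k - 1)). \<forall>q\<in>set (rev (seg C (Suc k) (n - 1))). \<not> E p q"
      unfolding set_rev by (rule no_edge_between_segs) (use k in auto)
  qed (use k in auto)
qed

end

text \<open>The hole is rotated so that one of the two neighbours comes first.\<close>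

lemma (in graph_hole) theta_if_two_nonadjacent_nbrs:
  assumes w: "w \<in> V" "w \<notin> set C" and nb: "nbrs E (set C) w = {a, b}"
    and ab: "a \<noteq> b" "\<not> E a b"
  shows "has_theta V E"
proof -
  have "a \<in> set C" using nb unfolding nbrs_def by blast
  then obtain i where i: "i < n" "C!i = a" by (auto simp: in_set_conv_nth)
  define C' where "C' = rotate i C"
  interpret rot: graph_hole V E C' unfolding C'_def by unfold_locales (rule graph, rule is_hole_rotate[OF hole])
  have len: "length C' = n" and setC': "set C' = set C" unfolding C'_def by simp_all
  have a0: "C'!0 = a" using i unfolding C'_def by (simp add: nth_rotate)
  have "b \<in> set C'" using nb setC' unfolding nbrs_def by blast
  then obtain k where k: "k < n" "C'!k = b" using len by (auto simp: in_set_conv_nth)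
  have "k \<noteq> 0" using k a0 ab by (cases k) auto
  moreover have "k \<noteq> 1" using rot.hole_edgeI[of 0 1] k a0 ab(2) len length_ge_4 by auto
  moreover have "k \<noteq> n - 1" using rot.hole_edgeI[of 0 "n - 1"] k a0 ab(2) len by auto
  ultimately have k2: "2 \<le> k" "k \<le> n - 2" using k by auto
  have "\<forall>t<length C'. E w (C'!t) \<longrightarrow> t = 0 \<or> t = k"
  proof (intro allI impI)
    fix t assume t: "t < length C'" "E w (C'!t)"
    then have "C'!t \<in> nbrs E (set C) w" using setC' nth_mem unfolding nbrs_def by blast
    then have "C'!t = C'!0 \<or> C'!t = C'!k" using nb a0 k(2) by simp
    then show "t = 0 \<or> t = k" using rot.nth_eq_iff[of t 0] rot.nth_eq_iff[of t k] len t(1) k(1) by auto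
  qed
  moreover have "E w (C'!0)" "E w (C'!k)" using nb a0 k(2) unfolding nbrs_def by blast+
  moreover have "w \<notin> set C'" using w setC' by simp
  ultimately show ?thesis using rot.theta_if_two_nbrs_at_0[OF w(1)] k2 len by simp
qed

section \<open>A path attached to a hole in normal position\<close>

text \<open>Every pair of strictly
  nested ends of a path can be brought into this position by rotating the hole.\<close>

locale attachment = graph_hole +
  fixes P :: "'a list" and u v :: 'a and x2 y1 y2 :: nat
  assumes path: "is_path V E P" and length_P: "length P \<ge> 2"
    and hd_P: "hd P = u" and last_P: "last P = v" and P_disjoint_C: "set P \<inter> set C = {}"
    and interior_no_nbrs: "\<forall>q\<in>set P. q \<noteq> u \<longrightarrow> q \<noteq> v \<longrightarrow> (\<forall>w\<in>set C. \<not> E q w)"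
    and pos: "x2 < y1" "y1 \<le> y2" "y2 < length C"
    and u_nbrs: "\<forall>t<length C. E u (C!t) \<longrightarrow> t \<le> x2" and u_0: "E u (C!0)" and u_x2: "E u (C!x2)"
    and v_nbrs: "\<forall>t<length C. E v (C!t) \<longrightarrow> y1 \<le> t \<and> t \<le> y2"
    and v_y1: "E v (C!y1)" and v_y2: "E v (C!y2)"
begin

lemma P_not_Nil: "P \<noteq> []"
  using length_P by auto

lemma distinct_P: "distinct P"
  using is_path_distinct[OF path] .

lemma u_in_P: "u \<in> set P"
  using hd_P P_not_Nil by auto

lemma v_in_P: "v \<in> set P"
  using last_P P_not_Nil by auto

lemma u_notin_C: "u \<notin> set C"
  using u_in_P P_disjoint_C by auto

lemma v_notin_C: "v \<notin> set C"
  using v_in_P P_disjoint_C by auto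

lemma u_in_V: "u \<in> V"
  using u_in_P path unfolding is_path_def by auto

lemma v_in_V: "v \<in> V"
  using v_in_P path unfolding is_path_def by auto

lemma u_neq_v: "u \<noteq> v"
proof
  assume "u = v"
  then have "P!0 = P!(length P - 1)" using hd_P last_P P_not_Nil by (simp add: hd_conv_nth last_conv_nth)
  then show False using nth_eq_iff_index_eq[OF distinct_P, of 0 "length P - 1"] length_P P_not_Nil by auto
qed

lemma nth_notin_P: "t < n \<Longrightarrow> C!t \<notin> set P"
  using P_disjoint_C by auto

lemma seg_disjoint_P: "b < n \<Longrightarrow> set (seg C a b) \<inter> set P = {}"
  using P_disjoint_C unfolding set_seg by auto

lemma edge_P_hole: "q \<in> set P \<Longrightarrow> t < n \<Longrightarrow> E q (C!t) \<Longrightarrow>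
    (q = u \<and> t \<le> x2) \<or> (q = v \<and> y1 \<le> t \<and> t \<le> y2)"
  using interior_no_nbrs u_nbrs v_nbrs by auto

lemma edge_hole_P: "q \<in> set P \<Longrightarrow> t < n \<Longrightarrow> E (C!t) q \<Longrightarrow>
    (q = u \<and> t \<le> x2) \<or> (q = v \<and> y1 \<le> t \<and> t \<le> y2)"
  using edge_P_hole E_sym by blast

lemma non_edge_hole_P: "q \<in> set P \<Longrightarrow> t < n \<Longrightarrow> \<not>((q = u \<and> t \<le> x2) \<or> (q = v \<and> y1 \<le> t \<and> t \<le> y2))
   \<Longrightarrow> \<not> E (C!t) q"
  using edge_hole_P by blast

lemma P_butlast_snoc: "P = butlast P @ [v]"
  using P_not_Nil last_P by (metis append_butlast_last_id)

lemma butlast_P_not_Nil: "butlast P \<noteq> []"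
  using length_P by (cases P) auto

lemma hd_butlast_P: "hd (butlast P) = u"
  using hd_P length_P by (cases P) auto

lemma v_notin_butlast_P: "v \<notin> set (butlast P)"
  using distinct_P P_butlast_snoc by (metis distinct_append disjoint_iff_not_equal list.set_intros(1))

lemma set_butlast_P: "set (butlast P) \<subseteq> set P"
  by (meson in_set_butlastD subsetI)

lemma seg_disjoint_butlast_P: "b < n \<Longrightarrow> set (seg C a b) \<inter> set (butlast P) = {}"
  using seg_disjoint_P set_butlast_P by blast

lemma E_u_v_iff: "E u v \<longleftrightarrow> length P = 2"
proof -
  have "P!0 = u" "P!(length P - 1) = v" using hd_P last_P P_not_Nil by (simp_all add: hd_conv_nth last_conv_nth)
  then show ?thesis using is_path_adj_iff[OF path, of 0 "length P - 1"] length_P P_not_Nil by auto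
qed

lemma no_edge_seg_P:
  assumes "b < n" "Q \<subseteq> set P"
    and "\<And>t. a \<le> t \<Longrightarrow> t \<le> b \<Longrightarrow> (u \<in> Q \<longrightarrow> x2 < t) \<and> (v \<in> Q \<longrightarrow> t < y1 \<or> y2 < t)"
  shows "\<forall>p\<in>set (seg C a b). \<forall>q\<in>Q. \<not> E p q"
  unfolding ball_set_seg
proof (intro allI impI ballI)
  fix t q assume "a \<le> t \<and> t \<le> b" "q \<in> Q"
  then show "\<not> E (C!t) q" using non_edge_hole_P[of q t] assms by fastforce
qed

lemma is_path_seg_snoc_v:
  assumes a: "a \<le> y1" and y: "y1 < y2"
  shows "is_path V E (seg C a y1 @ [v])"
proof (rule is_path_snocI[OF graph is_path_seg[OF graph hole]])
  show "a \<le> y1" "y1 < n" "\<not> (a = 0 \<and> y1 = n - 1)" using a y pos by auto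
  show "v \<in> V" "v \<notin> set (seg C a y1)" using v_in_V v_notin_C a y pos by (auto simp: set_seg)
  show "E (last (seg C a y1)) v" using v_y1 E_sym a by simp
  show "\<forall>b\<in>set (seg C a y1). E b v \<longrightarrow> b = last (seg C a y1)"
    unfolding ball_set_seg
  proof (intro allI impI)
    fix s assume s: "a \<le> s \<and> s \<le> y1" and e: "E (C!s) v"
    have "s < n" using s y pos by auto
    from edge_hole_P[OF v_in_P this e] have "s = y1" using s u_neq_v by auto
    then show "C!s = last (seg C a y1)" using a by simp
  qed
qed

lemma is_path_v_wrap:
  assumes y: "y1 < y2"
  shows "is_path V E (v # seg C y2 (n-1) @ [C!0])"
proof (rule is_path_ConsI[OF graph is_path_wrap_seg])
  show "2 \<le> y2" "y2 < n" using y pos by auto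
  show "v \<in> V" using v_in_V by simp
  show "v \<notin> set (seg C y2 (n-1) @ [C!0])" using v_notin_C pos by (auto simp: set_seg)
  show "E v (hd (seg C y2 (n-1) @ [C!0]))" using v_y2 pos by simp
  show "\<forall>b\<in>set (seg C y2 (n-1) @ [C!0]). E v b \<longrightarrow> b = hd (seg C y2 (n-1) @ [C!0])"
    unfolding set_append ball_Un ball_set_seg
  proof (intro allI impI conjI ballI)
    fix s assume s: "y2 \<le> s \<and> s \<le> n - 1" and e: "E v (C!s)"
    have "s < n" using s pos by auto
    from edge_P_hole[OF v_in_P this e] have "s = y2" using s u_neq_v by auto
    then show "C!s = hd (seg C y2 (n-1) @ [C!0])" using pos by simp
  next
    fix w assume "w \<in> set [C!0]" "E v w"
    then have "E v (C!0)" by simp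
    from edge_P_hole[OF v_in_P _ this] have False using pos u_neq_v length_ge_4 by auto
    then show "w = hd (seg C y2 (n-1) @ [C!0])" by simp
  qed
qed

lemma is_path_Cons_0_P:
  assumes "x2 = 0"
  shows "is_path V E (C!0 # P)"
proof (rule is_path_ConsI[OF graph path])
  show "C!0 \<in> V" "C!0 \<notin> set P" using nth_in_V[of 0] nth_notin_P[of 0] length_ge_4 by auto
  show "E (C!0) (hd P)" using hd_P u_0 E_sym by simp
  show "\<forall>b\<in>set P. E (C!0) b \<longrightarrow> b = hd P"
    using edge_hole_P[of _ 0] assms pos hd_P length_ge_4 by fastforce
qed

lemma theta_if_nonadjacent_pendants:
  assumes a: "x2 = 0" "y1 = y2" "y1 \<noteq> 1" "y1 \<noteq> n - 1"
  shows "has_theta V E"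
proof -
  have y: "2 \<le> y1" "y1 \<le> n - 2" "y1 < n" using a pos by auto
  have nonadj: "\<not> E (C!0) (C!y1)" by (rule hole_non_edge) (use y a in auto)
  have Q1: "is_path V E (C!0 # seg C 1 (y1-1) @ [C!y1])"
    using is_path_seg[OF graph hole, of 0 y1] seg_Cons_snoc[of 0 y1 C] y length_ge_4 by simp
  have "C!0 # rev (seg C (Suc y1) (n-1)) @ [C!y1] = rev (seg C y1 (n-1) @ [C!0])"
    using seg_Cons[of y1 "n-1" C] y by simp
  then have Q2: "is_path V E (C!0 # rev (seg C (Suc y1) (n-1)) @ [C!y1])"
    using is_path_rev[OF graph is_path_wrap_seg[of y1]] y by simp
  have "is_path V E ((C!0 # P) @ [C!y1])"
  proof (rule is_path_snocI[OF graph is_path_Cons_0_P[OF a(1)]])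
    show "C!y1 \<in> V" "C!y1 \<notin> set (C!0 # P)" using nth_in_V nth_notin_P nth_eq_iff[of 0 y1] y by auto
    show "E (last (C!0 # P)) (C!y1)" using last_P v_y1 P_not_Nil by simp
    show "\<forall>b\<in>set (C!0 # P). E b (C!y1) \<longrightarrow> b = last (C!0 # P)"
    proof (intro ballI impI)
      fix b assume "b \<in> set (C!0 # P)" "E b (C!y1)"
      then have "b \<in> set P" using nonadj by auto
      then have "b = v" using edge_P_hole[of b y1] \<open>E b (C!y1)\<close> y pos by auto
      then show "b = last (C!0 # P)" using last_P P_not_Nil by simp
    qed
  qed
  then have Q3: "is_path V E (C!0 # P @ [C!y1])" by simp
  show ?thesis
  proof (rule has_thetaI[OF graph nonadj Q1 Q2 Q3])
    show "set (seg C 1 (y1-1)) \<inter> set (rev (seg C (Suc y1) (n-1))) = {}" using seg_disjoint y by simp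
    show "set (seg C 1 (y1-1)) \<inter> set P = {}" "set (rev (seg C (Suc y1) (n-1))) \<inter> set P = {}"
      using seg_disjoint_P y by auto
    show "\<forall>p\<in>set (seg C 1 (y1-1)). \<forall>q\<in>set (rev (seg C (Suc y1) (n-1))). \<not> E p q"
      unfolding set_rev by (rule no_edge_between_segs) (use y in auto)
    show "\<forall>p\<in>set (seg C 1 (y1-1)). \<forall>q\<in>set P. \<not> E p q"
      by (rule no_edge_seg_P) (use y a in auto)
    show "\<forall>p\<in>set (rev (seg C (Suc y1) (n-1))). \<forall>q\<in>set P. \<not> E p q"
      unfolding set_rev by (rule no_edge_seg_P) (use y a in auto)
  qed (use y P_not_Nil in auto)
qed

lemma pyramid_if_pendant_and_edge:
  assumes a: "x2 = 0" "y2 = Suc y1"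
  shows "has_pyramid V E"
proof -
  have y: "1 \<le> y1" "y2 \<le> n - 1" "y1 < n" "y2 < n" using a pos by auto
  have Q1: "is_path V E (C!0 # seg C 1 y1)"
    using is_path_seg[OF graph hole, of 0 y1] seg_Cons[of 0 y1 C] y a by simp
  have Q2: "is_path V E (C!0 # rev (seg C y2 (n-1)))"
    using is_path_rev[OF graph is_path_wrap_seg[of y2]] y a by simp
  have Q3: "is_path V E (C!0 # P)" using is_path_Cons_0_P a by simp
  have lr1: "last (seg C 1 y1) = C!y1" and lr2: "last (rev (seg C y2 (n-1))) = C!y2"
    using y by (simp_all add: last_rev)
  show ?thesis
  proof (rule has_pyramidI[OF graph Q1 Q2 Q3])
    show "seg C 1 y1 \<noteq> []" "rev (seg C y2 (n-1)) \<noteq> []" "P \<noteq> []" using y P_not_Nil by auto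
    show "E (last (seg C 1 y1)) (last (rev (seg C y2 (n - 1))))"
      unfolding lr1 lr2 by (rule hole_edgeI) (use y a in auto)
    show "E (last (seg C 1 y1)) (last P)" unfolding lr1 using v_y1 E_sym last_P by simp
    show "E (last (rev (seg C y2 (n - 1)))) (last P)" unfolding lr2 using v_y2 E_sym last_P by simp
    show "set (seg C 1 y1) \<inter> set (rev (seg C y2 (n - 1))) = {}" using seg_disjoint y a by simp
    show "set (seg C 1 y1) \<inter> set P = {}" "set (rev (seg C y2 (n - 1))) \<inter> set P = {}"
      using seg_disjoint_P y by auto
    show "\<forall>p\<in>set (seg C 1 y1). \<forall>q\<in>set (rev (seg C y2 (n - 1))).
        E p q \<longrightarrow> p = last (seg C 1 y1) \<and> q = last (rev (seg C y2 (n - 1)))"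
      unfolding lr1 lr2 set_rev ball_set_seg
    proof (intro allI impI)
      fix s t assume s: "1 \<le> s \<and> s \<le> y1" and t: "y2 \<le> t \<and> t \<le> n - 1" and e: "E (C!s) (C!t)"
      have "s < n" "t < n" using s t y by auto
      from hole_edgeD[OF this e] have "s = y1 \<and> t = y2" using s t y a by auto
      then show "C!s = C!y1 \<and> C!t = C!y2" by simp
    qed
    show "\<forall>p\<in>set (seg C 1 y1). \<forall>q\<in>set P. E p q \<longrightarrow> p = last (seg C 1 y1) \<and> q = last P"
      unfolding lr1 ball_set_seg
    proof (intro allI impI ballI)
      fix s q assume s: "1 \<le> s \<and> s \<le> y1" and q: "q \<in> set P" and e: "E (C!s) q"
      have "s < n" using s y by auto
      from edge_hole_P[OF q this e] have "s = y1 \<and> q = v" using s a by auto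
      then show "C!s = C!y1 \<and> q = last P" using last_P by simp
    qed
    show "\<forall>p\<in>set (rev (seg C y2 (n-1))). \<forall>q\<in>set P. E p q \<longrightarrow> p = last (rev (seg C y2 (n-1))) \<and> q = last P"
      unfolding lr2 set_rev ball_set_seg
    proof (intro allI impI ballI)
      fix s q assume s: "y2 \<le> s \<and> s \<le> n - 1" and q: "q \<in> set P" and e: "E (C!s) q"
      have "s < n" using s y by auto
      from edge_hole_P[OF q this e] have "s = y2 \<and> q = v" using s a y by auto
      then show "C!s = C!y2 \<and> q = last P" using last_P by simp
    qed
    show "3 \<le> length (seg C 1 y1) + length (rev (seg C y2 (n - 1)))" using y a length_ge_4 by simp
    show "3 \<le> length (seg C 1 y1) + length P" "3 \<le> length (rev (seg C y2 (n - 1))) + length P"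
      using y length_P by auto
  qed
qed

lemma theta_if_pendant_and_wide:
  assumes a: "x2 = 0" "Suc (Suc y1) \<le> y2"
  shows "has_theta V E"
proof -
  have y: "1 \<le> y1" "y2 \<le> n - 1" "y1 + 2 < n" "y2 < n" using a pos by auto
  have Q1: "is_path V E (C!0 # seg C 1 y1 @ [v])"
    using is_path_seg_snoc_v[of 0] seg_Cons[of 0 y1 C] a by simp
  have Q2: "is_path V E (C!0 # rev (seg C y2 (n-1)) @ [v])"
    using is_path_rev[OF graph is_path_v_wrap] a by simp
  have Q3: "is_path V E (C!0 # butlast P @ [v])" using is_path_Cons_0_P a P_butlast_snoc by simp
  show ?thesis
  proof (rule has_thetaI[OF graph _ Q1 Q2 Q3])
    show "\<not> E (C!0) v" using edge_P_hole[OF v_in_P, of 0] E_sym u_neq_v y by auto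
    show "set (seg C 1 y1) \<inter> set (rev (seg C y2 (n-1))) = {}" using seg_disjoint y a by simp
    show "set (seg C 1 y1) \<inter> set (butlast P) = {}" "set (rev (seg C y2 (n-1))) \<inter> set (butlast P) = {}"
      using seg_disjoint_butlast_P y by auto
    show "\<forall>p\<in>set (seg C 1 y1). \<forall>q\<in>set (rev (seg C y2 (n-1))). \<not> E p q"
      unfolding set_rev by (rule no_edge_between_segs) (use y a in auto)
    show "\<forall>p\<in>set (seg C 1 y1). \<forall>q\<in>set (butlast P). \<not> E p q"
      by (rule no_edge_seg_P) (use y a set_butlast_P v_notin_butlast_P in auto)
    show "\<forall>p\<in>set (rev (seg C y2 (n-1))). \<forall>q\<in>set (butlast P). \<not> E p q"
      unfolding set_rev by (rule no_edge_seg_P) (use y a set_butlast_P v_notin_butlast_P in auto)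
  qed (use y butlast_P_not_Nil in auto)
qed

lemma prism_if_two_edges:
  assumes a: "x2 = 1" "y2 = Suc y1"
  shows "has_prism V E"
proof -
  have y: "2 \<le> y1" "y2 \<le> n - 1" "y1 < n" "y2 < n" "3 \<le> y2" using a pos by auto
  let ?Q1 = "seg C 1 y1" and ?Q2 = "rev (seg C y2 (n-1) @ [C!0])"
  have Q1: "is_path V E ?Q1" using is_path_seg[OF graph hole, of 1 y1] y by simp
  have Q2: "is_path V E ?Q2" using is_path_rev[OF graph is_path_wrap_seg[of y2]] y by simp
  have h: "hd ?Q1 = C!1" "last ?Q1 = C!y1" "hd ?Q2 = C!0" "last ?Q2 = C!y2" "hd P = u" "last P = v"
    using y hd_P last_P by (simp_all add: hd_rev last_rev)
  have u1: "E u (C!1)" using u_x2 a by simp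
  show ?thesis
  proof (rule has_prismI[OF graph Q1 Q2 path], unfold h)
    show "E (C!1) (C!0)" by (rule hole_edgeI) (use length_ge_4 in auto)
    show "E (C!1) u" "E (C!0) u" using u1 u_0 E_sym by auto
    show "E (C!y1) (C!y2)" by (rule hole_edgeI) (use y a in auto)
    show "E (C!y1) v" "E (C!y2) v" using v_y1 v_y2 E_sym by auto
    show "{C!1, C!0, u} \<inter> {C!y1, C!y2, v} = {}"
      using nth_eq_iff[of 1 y1] nth_eq_iff[of 1 y2] nth_eq_iff[of 0 y1] nth_eq_iff[of 0 y2] y length_ge_4 u_neq_v u_notin_C v_notin_C
      by (auto simp: in_set_conv_nth)
    have dd: "set (seg C 1 y1) \<inter> set (seg C y2 (n-1)) = {}" by (rule seg_disjoint) (use y a in auto)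
    show "set ?Q1 \<inter> set ?Q2 = {}" using dd nth_in_seg_iff[of y1 0 1] y by auto
    show "set ?Q1 \<inter> set P = {}" "set ?Q2 \<inter> set P = {}" using seg_disjoint_P y nth_notin_P[of 0] by auto
    show "\<forall>p\<in>set ?Q1. \<forall>q\<in>set ?Q2. E p q \<longrightarrow> p = C!1 \<and> q = C!0 \<or> p = C!y1 \<and> q = C!y2"
      unfolding set_rev set_append ball_Un ball_set_seg
    proof (intro allI impI conjI ballI)
      fix s t assume s: "1 \<le> s \<and> s \<le> y1" and t: "y2 \<le> t \<and> t \<le> n - 1" and e: "E (C!s) (C!t)"
      have "s < n" "t < n" using s t y by auto
      from hole_edgeD[OF this e] have "s = y1 \<and> t = y2" using s t y a by auto
      then show "C!s = C!1 \<and> C!t = C!0 \<or> C!s = C!y1 \<and> C!t = C!y2" by simp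
    next
      fix s w assume s: "1 \<le> s \<and> s \<le> y1" and w: "w \<in> set [C!0]" and e: "E (C!s) w"
      have "s < n" "0 < n" using s y by auto
      from hole_edgeD[OF this] e w have "s = 1" using s y a by auto
      then show "C!s = C!1 \<and> w = C!0 \<or> C!s = C!y1 \<and> w = C!y2" using w by simp
    qed
    show "\<forall>p\<in>set ?Q1. \<forall>q\<in>set P. E p q \<longrightarrow> p = C!1 \<and> q = u \<or> p = C!y1 \<and> q = v"
      unfolding ball_set_seg
    proof (intro allI impI ballI)
      fix s q assume s: "1 \<le> s \<and> s \<le> y1" and q: "q \<in> set P" and e: "E (C!s) q"
      have "s < n" using s y by auto
      from edge_hole_P[OF q this e] have "(s = 1 \<and> q = u) \<or> (s = y1 \<and> q = v)" using s a by auto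
      then show "C!s = C!1 \<and> q = u \<or> C!s = C!y1 \<and> q = v" by auto
    qed
    show "\<forall>p\<in>set ?Q2. \<forall>q\<in>set P. E p q \<longrightarrow> p = C!0 \<and> q = u \<or> p = C!y2 \<and> q = v"
      unfolding set_rev set_append ball_Un ball_set_seg
    proof (intro allI impI conjI ballI)
      fix s q assume s: "y2 \<le> s \<and> s \<le> n - 1" and q: "q \<in> set P" and e: "E (C!s) q"
      have "s < n" using s y by auto
      from edge_hole_P[OF q this e] have "s = y2 \<and> q = v" using s a y by auto
      then show "C!s = C!0 \<and> q = u \<or> C!s = C!y2 \<and> q = v" by auto
    next
      fix w q assume w: "w \<in> set [C!0]" and q: "q \<in> set P" and e: "E w q"
      have "E (C!0) q" using w e by simp
      from edge_hole_P[OF q _ this] have "q = u" using y by auto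
      then show "w = C!0 \<and> q = u \<or> w = C!y2 \<and> q = v" using w by simp
    qed
  qed
qed

lemma pyramid_if_edge_and_wide:
  assumes a: "x2 = 1" "Suc (Suc y1) \<le> y2"
  shows "has_pyramid V E"
proof -
  have y: "2 \<le> y1" "y2 \<le> n - 1" "y1 + 2 < n" "y2 < n" "4 \<le> y2" using a pos by auto
  let ?R1 = "rev (seg C 1 y1)" and ?R2 = "seg C y2 (n-1) @ [C!0]" and ?R3 = "rev (butlast P)"
  have Q1: "is_path V E (v # ?R1)" using is_path_rev[OF graph is_path_seg_snoc_v[of 1]] y a by simp
  have Q2: "is_path V E (v # ?R2)" using is_path_v_wrap a by simp
  have Q3: "is_path V E (v # ?R3)"
  proof -
    have "v # ?R3 = rev P" using P_butlast_snoc by (metis rev.simps(2) rev_rev_ident)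
    then show ?thesis using is_path_rev[OF graph path] by simp
  qed
  have l: "last ?R1 = C!1" "last ?R2 = C!0" "last ?R3 = u"
    using y butlast_P_not_Nil hd_P by (simp_all add: last_rev hd_butlast_P)
  show ?thesis
  proof (rule has_pyramidI[OF graph Q1 Q2 Q3], unfold l)
    show "?R1 \<noteq> []" "?R2 \<noteq> []" "?R3 \<noteq> []" using y butlast_P_not_Nil by auto
    show "E (C!1) (C!0)" by (rule hole_edgeI) (use length_ge_4 in auto)
    show "E (C!1) u" "E (C!0) u" using u_x2 a u_0 E_sym by auto
    have dd: "set (seg C 1 y1) \<inter> set (seg C y2 (n-1)) = {}" by (rule seg_disjoint) (use y a in auto)
    show "set ?R1 \<inter> set ?R2 = {}" using dd nth_in_seg_iff[of y1 0 1] y by auto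
    show "set ?R1 \<inter> set ?R3 = {}" "set ?R2 \<inter> set ?R3 = {}"
      using seg_disjoint_butlast_P y nth_notin_P[of 0] set_butlast_P by auto
    show "\<forall>p\<in>set ?R1. \<forall>q\<in>set ?R2. E p q \<longrightarrow> p = C!1 \<and> q = C!0"
      unfolding set_rev set_append ball_Un ball_set_seg
    proof (intro allI impI conjI ballI)
      fix s t assume s: "1 \<le> s \<and> s \<le> y1" and t: "y2 \<le> t \<and> t \<le> n - 1" and e: "E (C!s) (C!t)"
      have "s < n" "t < n" using s t y by auto
      from hole_edgeD[OF this e] have False using s t y a by auto
      then show "C!s = C!1" "C!t = C!0" by simp_all
    next
      fix s w assume s: "1 \<le> s \<and> s \<le> y1" and w: "w \<in> set [C!0]" and e: "E (C!s) w"
      have "s < n" "0 < n" using s y by auto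
      from hole_edgeD[OF this] e w have "s = 1" using s y by auto
      then show "C!s = C!1" "w = C!0" using w by simp_all
    qed
    show "\<forall>p\<in>set ?R1. \<forall>q\<in>set ?R3. E p q \<longrightarrow> p = C!1 \<and> q = u"
      unfolding set_rev ball_set_seg
    proof (intro allI impI ballI)
      fix s q assume s: "1 \<le> s \<and> s \<le> y1" and q: "q \<in> set (butlast P)" and e: "E (C!s) q"
      have "s < n" using s y by auto
      from edge_hole_P[OF _ this e] q set_butlast_P v_notin_butlast_P have "s = 1 \<and> q = u" using s a by auto
      then show "C!s = C!1 \<and> q = u" by auto
    qed
    show "\<forall>p\<in>set ?R2. \<forall>q\<in>set ?R3. E p q \<longrightarrow> p = C!0 \<and> q = u"
      unfolding set_rev set_append ball_Un ball_set_seg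
    proof (intro allI impI conjI ballI)
      fix s q assume s: "y2 \<le> s \<and> s \<le> n - 1" and q: "q \<in> set (butlast P)" and e: "E (C!s) q"
      have "s < n" using s y by auto
      from edge_hole_P[OF _ this e] q set_butlast_P v_notin_butlast_P have False using s a y by auto
      then show "C!s = C!0" "q = u" by simp_all
    next
      fix w q assume w: "w \<in> set [C!0]" and q: "q \<in> set (butlast P)" and e: "E w q"
      have "E (C!0) q" using w e by simp
      from edge_hole_P[OF _ _ this] q set_butlast_P v_notin_butlast_P have "q = u" using y by auto
      then show "w = C!0" "q = u" using w by simp_all
    qed
    show "3 \<le> length ?R1 + length ?R2" "3 \<le> length ?R1 + length ?R3" "3 \<le> length ?R2 + length ?R3"
      using y length_P by auto
  qed
qed

lemma P_middle: "P = u # tl (butlast P) @ [v]"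
proof -
  have e1: "butlast P = u # tl (butlast P)" using butlast_P_not_Nil hd_butlast_P by (cases "butlast P") auto
  show ?thesis using P_butlast_snoc e1 by (metis append_Cons)
qed

lemma in_middle_P: "q \<in> set (tl (butlast P)) \<Longrightarrow> q \<in> set P \<and> q \<noteq> u \<and> q \<noteq> v"
proof -
  assume q: "q \<in> set (tl (butlast P))"
  have d: "distinct (u # tl (butlast P) @ [v])" using distinct_P P_middle by metis
  have "q \<in> set P" using q P_middle by (metis Un_iff list.set_intros(2) set_append)
  then show ?thesis using d q by auto
qed

lemma theta_if_both_wide_long_path:
  assumes a: "2 \<le> x2" "Suc (Suc y1) \<le> y2" and long: "3 \<le> length P"
  shows "has_theta V E"
proof -
  have y: "y2 \<le> n - 1" "y1 + 2 < n" "y2 < n" "x2 < n" "3 \<le> y1" "2 \<le> y2" using a pos by auto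
  have nuv: "\<not> E u v" using E_u_v_iff long by simp
  have Q1: "is_path V E (u # seg C x2 y1 @ [v])"
  proof (rule is_path_ConsI[OF graph is_path_seg_snoc_v])
    show "x2 \<le> y1" "y1 < y2" using pos a by auto
    show "u \<in> V" "u \<notin> set (seg C x2 y1 @ [v])" using u_in_V u_notin_C u_neq_v y by (auto simp: set_seg)
    show "E u (hd (seg C x2 y1 @ [v]))" using u_x2 pos by simp
    show "\<forall>b\<in>set (seg C x2 y1 @ [v]). E u b \<longrightarrow> b = hd (seg C x2 y1 @ [v])"
      unfolding set_append ball_Un ball_set_seg
    proof (intro allI impI conjI ballI)
      fix s assume s: "x2 \<le> s \<and> s \<le> y1" and e: "E u (C!s)"
      have "s < n" using s y by linarith
      then have "s = x2" using u_nbrs[rule_format, OF _ e] s by fastforce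
      then show "C!s = hd (seg C x2 y1 @ [v])" using pos by simp
    qed (use nuv in simp)
  qed
  let ?B = "rev (seg C y2 (n-1) @ [C!0])"
  have set_B: "set ?B = set (seg C y2 (n-1)) \<union> set (seg C 0 0)" by (auto simp: set_seg)
  have "is_path V E (?B @ [v])" using is_path_rev[OF graph is_path_v_wrap] a by simp
  then have Q2: "is_path V E (u # ?B @ [v])"
  proof (rule is_path_ConsI[OF graph])
    show "u \<in> V" "u \<notin> set (?B @ [v])" using u_in_V u_notin_C u_neq_v y by (auto simp: set_seg)
    show "E u (hd (?B @ [v]))" using u_0 by (simp add: hd_rev)
    show "\<forall>b\<in>set (?B @ [v]). E u b \<longrightarrow> b = hd (?B @ [v])"
      unfolding set_append ball_Un set_rev ball_set_seg
    proof (intro allI impI conjI ballI)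
      fix s assume s: "y2 \<le> s \<and> s \<le> n - 1" and e: "E u (C!s)"
      have "s < n" using s y by linarith
      then show "C!s = hd (?B @ [v])" using u_nbrs[rule_format, OF _ e] s pos by fastforce
    qed (use nuv in \<open>auto simp: hd_rev\<close>)
  qed
  have Q3: "is_path V E (u # tl (butlast P) @ [v])" using path P_middle by simp
  have middle: "set (tl (butlast P)) \<subseteq> set P" "u \<notin> set (tl (butlast P))" "v \<notin> set (tl (butlast P))"
    using in_middle_P by auto
  show ?thesis
  proof (rule has_thetaI[OF graph nuv Q1 Q2 Q3])
    show "tl (butlast P) \<noteq> []" using long by (cases P; cases "tl P"; auto)
    have "set (seg C x2 y1) \<inter> set (seg C y2 (n-1)) = {}" by (rule seg_disjoint) (use a y in auto)
    then show "set (seg C x2 y1) \<inter> set ?B = {}" using nth_in_seg_iff[of y1 0 x2] y a by auto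
    show "set (seg C x2 y1) \<inter> set (tl (butlast P)) = {}" "set ?B \<inter> set (tl (butlast P)) = {}"
      using middle seg_disjoint_P[of y1 x2] seg_disjoint_P[of "n-1" y2] nth_notin_P[of 0] y by auto
    have "\<forall>p\<in>set (seg C x2 y1). \<forall>q\<in>set (seg C y2 (n-1)). \<not> E p q"
      "\<forall>p\<in>set (seg C 0 0). \<forall>q\<in>set (seg C x2 y1). \<not> E p q"
      by (rule no_edge_between_segs; use a y in auto)+
    then show "\<forall>p\<in>set (seg C x2 y1). \<forall>q\<in>set ?B. \<not> E p q"
      unfolding set_B using E_sym by blast
    show "\<forall>p\<in>set (seg C x2 y1). \<forall>q\<in>set (tl (butlast P)). \<not> E p q"
      by (rule no_edge_seg_P) (use y middle in auto)
    have "\<forall>p\<in>set (seg C y2 (n-1)) \<union> set (seg C 0 0). \<forall>q\<in>set (tl (butlast P)). \<not> E p q"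
      using no_edge_seg_P[of "n-1" "set (tl (butlast P))" y2] no_edge_seg_P[of 0 "set (tl (butlast P))" 0]
        middle y by auto
    then show "\<forall>p\<in>set ?B. \<forall>q\<in>set (tl (butlast P)). \<not> E p q" unfolding set_B .
  qed (use pos in auto)
qed

lemma turtle_if_both_wide_short_path:
  assumes a: "2 \<le> x2" "Suc (Suc y1) \<le> y2" and lP: "length P = 2"
    and t0: "t0 < n" "E u (C!t0)" "t0 \<noteq> 0" "t0 \<noteq> x2"
    and t1: "t1 < n" "E v (C!t1)" "t1 \<noteq> y1" "t1 \<noteq> y2"
  shows "has_turtle V E"
proof -
  have y: "y2 \<le> n - 1" "y2 < n" "x2 < n" "Suc x2 \<le> n - 1" using a pos by auto
  have t0': "t0 \<le> x2" using u_nbrs t0 by auto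
  have t1': "y1 \<le> t1" "t1 \<le> y2" using v_nbrs t1 by auto
  let ?P1 = "seg C 0 x2" and ?P2 = "rev (seg C (Suc x2) (n-1))"
  have P1: "is_path V E ?P1" using is_path_seg[OF graph hole, of 0 x2] y by simp
  have P2: "is_path V E ?P2" using is_path_rev[OF graph is_path_seg[OF graph hole, of "Suc x2" "n-1"]] y by simp
  have un: "set ?P1 \<union> set ?P2 = set C" using set_seg_split[of x2] y by simp
  have hs: "hole_set V E (set C)" unfolding hole_set_def using hole by blast
  show ?thesis unfolding has_turtle_def
  proof (intro exI conjI)
    show "path_from_to V E ?P1 (C!0) (C!x2)" using P1 y by (simp add: path_from_to_def)
    show "path_from_to V E ?P2 (C!(n-1)) (C!(Suc x2))" using P2 y by (simp add: path_from_to_def hd_rev last_rev)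
    show "set ?P1 \<inter> set ?P2 = {}" using seg_disjoint[of x2 "Suc x2" "n-1" 0] y by simp
    show "E (C!0) (C!(n-1))" by (rule hole_edgeI) (use length_ge_4 in auto)
    show "E (C!x2) (C!(Suc x2))" by (rule hole_edgeI) (use y in auto)
    show "hole_set V E (set ?P1 \<union> set ?P2)" using hs un by simp
    show "E u v" using E_u_v_iff lP by simp
    show "u \<notin> set ?P1 \<union> set ?P2" "v \<notin> set ?P1 \<union> set ?P2" using un u_notin_C v_notin_C by auto
    show "3 \<le> card (nbrs E (set ?P1) u)"
    proof (rule three_le_card)
      show "finite (nbrs E (set ?P1) u)" unfolding nbrs_def by simp
      show "{C!0, C!t0, C!x2} \<subseteq> nbrs E (set ?P1) u"
        unfolding nbrs_def using u_0 t0 t0' u_x2 y nth_in_seg_iff[of x2 0 0] nth_in_seg_iff[of x2 t0 0] nth_in_seg_iff[of x2 x2 0] by auto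
      show "C!0 \<noteq> C!t0" "C!0 \<noteq> C!x2" "C!t0 \<noteq> C!x2" using nth_eq_iff t0 t0' a y by auto
    qed
    show "nbrs E (set ?P2) u = {}"
    proof -
      have "\<forall>w\<in>set ?P2. \<not> E u w"
        unfolding set_rev ball_set_seg
      proof (intro allI impI)
        fix s assume s: "Suc x2 \<le> s \<and> s \<le> n - 1"
        then have "s < n" using y by auto
        then show "\<not> E u (C!s)" using u_nbrs s by auto
      qed
      then show ?thesis unfolding nbrs_def by auto
    qed
    show "3 \<le> card (nbrs E (set ?P2) v)"
    proof (rule three_le_card)
      show "finite (nbrs E (set ?P2) v)" unfolding nbrs_def by simp
      show "{C!y1, C!t1, C!y2} \<subseteq> nbrs E (set ?P2) v"
        unfolding nbrs_def set_rev using v_y1 v_y2 t1 t1' y pos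
          nth_in_seg_iff[of "n-1" y1 "Suc x2"] nth_in_seg_iff[of "n-1" t1 "Suc x2"] nth_in_seg_iff[of "n-1" y2 "Suc x2"] by auto
      show "C!y1 \<noteq> C!t1" "C!y1 \<noteq> C!y2" "C!t1 \<noteq> C!y2" using nth_eq_iff t1 t1' a y pos by auto
    qed
    show "nbrs E (set ?P1) v = {}"
    proof -
      have "\<forall>w\<in>set ?P1. \<not> E v w"
        unfolding ball_set_seg
      proof (intro allI impI)
        fix s assume s: "0 \<le> s \<and> s \<le> x2"
        then have sn: "s < n" using y by auto
        show "\<not> E v (C!s)" using v_nbrs[rule_format, OF sn] s pos by auto
      qed
      then show ?thesis unfolding nbrs_def by auto
    qed
  qed
qed

lemma theta_or_turtle_if_both_wide:
  assumes a: "2 \<le> x2" "Suc (Suc y1) \<le> y2"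
  shows "has_theta V E \<or> has_turtle V E"
proof (cases "3 \<le> length P")
  case True then show ?thesis using theta_if_both_wide_long_path a by blast
next
  case False
  then have lP: "length P = 2" using length_P by auto
  have pos': "x2 < n - 1" "0 < y1" "y2 < n" using a pos by auto
  show ?thesis
  proof (cases "\<forall>t<n. E u (C!t) \<longrightarrow> t = 0 \<or> t = x2")
    case True
    have "has_theta V E"
    proof (rule theta_if_two_nonadjacent_nbrs[OF u_in_V u_notin_C])
      show "nbrs E (set C) u = {C!0, C!x2}" by (rule nbrs_eq_nth_pair) (use True u_0 u_x2 pos' in auto)
      show "C!0 \<noteq> C!x2" "\<not> E (C!0) (C!x2)" using nth_eq_iff[of 0 x2] hole_non_edge[of 0 x2] a pos' by auto
    qed
    then show ?thesis by simp
  next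
    case False
    then obtain t0 where t0: "t0 < n" "E u (C!t0)" "t0 \<noteq> 0" "t0 \<noteq> x2" by blast
    show ?thesis
    proof (cases "\<forall>t<n. E v (C!t) \<longrightarrow> t = y1 \<or> t = y2")
      case True
      have "has_theta V E"
      proof (rule theta_if_two_nonadjacent_nbrs[OF v_in_V v_notin_C])
        show "nbrs E (set C) v = {C!y1, C!y2}" by (rule nbrs_eq_nth_pair) (use True v_y1 v_y2 pos pos' in auto)
        show "C!y1 \<noteq> C!y2" "\<not> E (C!y1) (C!y2)"
          using nth_eq_iff[of y1 y2] hole_non_edge[of y1 y2] a pos' by auto
      qed
      then show ?thesis by simp
    next
      case False
      then obtain t1 where t1: "t1 < n" "E v (C!t1)" "t1 \<noteq> y1" "t1 \<noteq> y2" by blast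
      show ?thesis using turtle_if_both_wide_short_path[OF a lP t0 t1] by simp
    qed
  qed
qed

end

lemma add_mod_if: "(a::nat) < n \<Longrightarrow> t < n \<Longrightarrow> (a + t) mod n = (if a + t < n then a + t else a + t - n)"
  by (simp add: mod_if le_mod_geq)

context attachment
begin

lemma adjacent_pendants_if_u_span_le:
  assumes "in_C V E" and span: "min x2 2 \<le> min (y2 - y1) 2"
  shows "x2 = 0 \<and> y1 = y2 \<and> E (C!0) (C!y1)"
proof -
  have obstructions: "\<not> has_theta V E" "\<not> has_pyramid V E" "\<not> has_prism V E" "\<not> has_turtle V E"
    using assms(1) unfolding in_C_def by auto
  consider (pendant) "x2 = 0" | (edge) "x2 = 1" | (wide) "2 \<le> x2" by linarith
  then show ?thesis
  proof cases
    case pendant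
    consider "y2 = y1" | "y2 = Suc y1" | "Suc (Suc y1) \<le> y2" using pos by linarith
    then show ?thesis
    proof cases
      case 1
      show ?thesis
      proof (cases "y1 = 1 \<or> y1 = n - 1")
        case True
        then have "E (C!0) (C!y1)" by (intro hole_edgeI) (use pos in auto)
        then show ?thesis using pendant 1 by simp
      next
        case False
        then show ?thesis using theta_if_nonadjacent_pendants[OF pendant] 1 obstructions by auto
      qed
    next
      case 2
      then show ?thesis using pyramid_if_pendant_and_edge[OF pendant] obstructions by auto
    next
      case 3
      then show ?thesis using theta_if_pendant_and_wide[OF pendant] obstructions by auto
    qed
  next
    case edge
    then have "1 \<le> y2 - y1" using span by (auto simp: min_def split: if_splits)
    then consider "y2 = Suc y1" | "Suc (Suc y1) \<le> y2" by linarith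
    then show ?thesis
      using prism_if_two_edges[OF edge] pyramid_if_edge_and_wide[OF edge] obstructions by cases auto
  next
    case wide
    then have "2 \<le> y2 - y1" using span by (auto simp: min_def split: if_splits)
    then have "Suc (Suc y1) \<le> y2" by linarith
    then show ?thesis using theta_or_turtle_if_both_wide[OF wide] obstructions by auto
  qed
qed

lemma attachment_mirror: "attachment V E (rotate y1 C) (rev P) v u (y2 - y1) (n - y1) (n - y1 + x2)"
proof -
  let ?C = "rotate y1 C"
  have nth': "t < n \<Longrightarrow> ?C ! t = C ! ((y1 + t) mod n)" for t by (simp add: nth_rotate)
  have y1n: "y1 < n" using pos by auto
  show ?thesis
  proof (unfold_locales)
    show "graph V E" by (rule graph)
    show "is_hole V E ?C" by (rule is_hole_rotate[OF hole])
    show "is_path V E (rev P)" by (rule is_path_rev[OF graph path])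
    show "2 \<le> length (rev P)" using length_P by simp
    show "hd (rev P) = v" "last (rev P) = u" using last_P hd_P P_not_Nil by (simp_all add: hd_rev last_rev)
    show "set (rev P) \<inter> set ?C = {}" using P_disjoint_C by simp
    show "\<forall>q\<in>set (rev P). q \<noteq> v \<longrightarrow> q \<noteq> u \<longrightarrow> (\<forall>w\<in>set ?C. \<not> E q w)" using interior_no_nbrs by auto
    show "y2 - y1 < n - y1" "n - y1 \<le> n - y1 + x2" "n - y1 + x2 < length ?C" using pos by auto
    show "\<forall>t<length ?C. E v (?C ! t) \<longrightarrow> t \<le> y2 - y1"
    proof (intro allI impI)
      fix t assume t: "t < length ?C" and e: "E v (?C ! t)"
      then have tn: "t < n" by simp
      have "(y1 + t) mod n < n" using length_ge_4 by auto
      then have "y1 \<le> (y1 + t) mod n \<and> (y1 + t) mod n \<le> y2" using v_nbrs e nth'[OF tn] by auto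
      then show "t \<le> y2 - y1" using add_mod_if[OF y1n tn] tn by (auto split: if_splits)
    qed
    show "E v (?C ! 0)" using v_y1 nth'[of 0] length_ge_4 y1n by simp
    show "E v (?C ! (y2 - y1))" using v_y2 nth'[of "y2 - y1"] pos by simp
    show "\<forall>t<length ?C. E u (?C ! t) \<longrightarrow> n - y1 \<le> t \<and> t \<le> n - y1 + x2"
    proof (intro allI impI)
      fix t assume t: "t < length ?C" and e: "E u (?C ! t)"
      then have tn: "t < n" by simp
      have "(y1 + t) mod n < n" using length_ge_4 by auto
      then have "(y1 + t) mod n \<le> x2" using u_nbrs e nth'[OF tn] by auto
      then show "n - y1 \<le> t \<and> t \<le> n - y1 + x2" using add_mod_if[OF y1n tn] pos by (auto split: if_splits)
    qed
    have m1: "(y1 + (n - y1)) mod n = 0" using y1n by simp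
    show "E u (?C ! (n - y1))" using u_0 nth'[of "n - y1"] m1 pos by simp
    have m2: "(y1 + (n - y1 + x2)) mod n = x2" using y1n pos by simp
    show "E u (?C ! (n - y1 + x2))" using u_x2 nth'[of "n - y1 + x2"] m2 pos by simp
  qed
qed

text \<open>In the mirrored configuration the roles of \<open>u\<close> and \<open>v\<close> are exchanged, so one of the two
  satisfies the span condition; either way both spans are 0.\<close>

lemma adjacent_pendants:
  assumes "in_C V E"
  shows "x2 = 0 \<and> y1 = y2 \<and> E (C!0) (C!y1)"
proof (cases "min x2 2 \<le> min (y2 - y1) 2")
  case True
  then show ?thesis by (rule adjacent_pendants_if_u_span_le[OF assms])
next
  case False
  interpret mirror: attachment V E "rotate y1 C" "rev P" v u "y2 - y1" "n - y1" "n - y1 + x2"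
    by (rule attachment_mirror)
  have "min (y2 - y1) 2 \<le> min (n - y1 + x2 - (n - y1)) 2" using False unfolding min_def by auto
  then have "y2 - y1 = 0 \<and> n - y1 = n - y1 + x2"
    using mirror.adjacent_pendants_if_u_span_le[OF assms] by blast
  then show ?thesis using False by simp
qed

end

section \<open>Bringing strictly nested ends into normal position\<close>

context graph_hole
begin

lemma nth_rotate_in_arcD:
  assumes "i < n" "t < n" "rotate i C ! t \<in> arc C i j"
  shows "t \<le> (j + n - i) mod n"
proof -
  obtain k where k: "k \<le> (j + n - i) mod n" "rotate i C ! t = C ! ((i + k) mod n)"
    using assms(3) unfolding arc_def by blast
  have "k < n" using k(1) length_ge_4 by (meson le_less_trans mod_less_divisor zero_less_numeral less_le_trans)
  then have "(i + t) mod n = (i + k) mod n"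
    using k(2) assms(2) nth_eq_iff by (simp add: nth_rotate)
  then have "t = k" using add_mod_cancel_left[OF assms(2) \<open>k < n\<close>] by simp
  then show ?thesis using k(1) by simp
qed

lemma nth_rotate_in_opposite_arcD:
  assumes ij: "i < n" "j < n" "i \<noteq> j" and t: "t < n" "rotate i C ! t \<in> arc C j i"
  shows "(j + n - i) mod n \<le> t \<or> t = 0"
proof -
  define d where "d = (j + n - i) mod n"
  obtain k where k: "k \<le> (i + n - j) mod n" "rotate i C ! t = C ! ((j + k) mod n)"
    using t(2) unfolding arc_def by blast
  have dk: "d + (i + n - j) mod n = n"
  proof (cases "i < j")
    case True
    then have "d = j - i" "(i + n - j) mod n = i + n - j" unfolding d_def using ij by (simp_all add: mod_if)
    then show ?thesis using True ij by simp
  next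
    case False
    then have "d = j + n - i" "(i + n - j) mod n = i - j" unfolding d_def using ij by (simp_all add: mod_if)
    then show ?thesis using False ij by simp
  qed
  have "(i + (d + k) mod n) mod n = (j + k) mod n"
  proof -
    have "(i + (d + k) mod n) mod n = ((i + d) mod n + k) mod n" by (simp add: mod_simps add.assoc)
    also have "(i + d) mod n = j" unfolding d_def using ij by (simp add: mod_simps)
    finally show ?thesis .
  qed
  then have "rotate i C ! t = rotate i C ! ((d + k) mod n)"
    using k(2) length_ge_4 by (simp add: nth_rotate)
  then have "t = (d + k) mod n"
    using distinct_C t(1) length_ge_4 by (simp add: nth_eq_iff_index_eq)
  moreover have "d + k \<le> n" using k(1) dk by linarith
  ultimately have "d \<le> t \<or> t = 0" by (cases "d + k = n") auto
  then show ?thesis unfolding d_def .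
qed

lemma separating_rotation:
  assumes ij: "i < n" "j < n" "i \<noteq> j"
    and u_arc: "nbrs E (set C) u \<subseteq> arc C i j" and v_arc: "nbrs E (set C) v \<subseteq> arc C j i"
    and u_nbr: "nbrs E (set C) u \<noteq> {}" and disj: "nbrs E (set C) u \<inter> nbrs E (set C) v = {}"
  shows "\<exists>r. E u (rotate r C ! 0) \<and>
    (\<forall>s<n. \<forall>t<n. E u (rotate r C ! s) \<longrightarrow> E v (rotate r C ! t) \<longrightarrow> s < t)"
proof -
  let ?C0 = "rotate i C"
  define d where "d = (j + n - i) mod n"
  have in_C: "rotate k C ! t \<in> set C" if "t < n" for k t using that by (metis length_rotate nth_mem set_rotate)
  have u_le: "t \<le> d" if "t < n" "E u (?C0 ! t)" for t
    using nth_rotate_in_arcD[OF ij(1) that(1)] u_arc in_C[OF that(1)] that(2) unfolding d_def nbrs_def by blast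
  have v_ge: "d \<le> t \<or> t = 0" if "t < n" "E v (?C0 ! t)" for t
    using nth_rotate_in_opposite_arcD[OF ij that(1)] v_arc in_C[OF that(1)] that(2) unfolding d_def nbrs_def by blast
  have not_common: "\<not> (E u w \<and> E v w)" if "w \<in> set C" for w
    using disj that unfolding nbrs_def by blast
  define U where "U = {t. t < n \<and> E u (?C0 ! t)}"
  have "U \<noteq> {}"
  proof -
    obtain w where "w \<in> set C" "E u w" using u_nbr unfolding nbrs_def by auto
    moreover from \<open>w \<in> set C\<close> obtain t where "t < n" "?C0 ! t = w"
      by (metis in_set_conv_nth length_rotate set_rotate)
    ultimately show ?thesis unfolding U_def by auto
  qed
  define x1 where "x1 = Min U"
  have x1: "x1 < n" "E u (?C0 ! x1)" using Min_in[of U] \<open>U \<noteq> {}\<close> unfolding x1_def U_def by auto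
  have x1_min: "x1 \<le> t" if "t < n" "E u (?C0 ! t)" for t using that unfolding x1_def U_def by simp
  have x1_d: "x1 \<le> d" using u_le x1 by blast
  have d_lt: "d < n" unfolding d_def using length_ge_4 by simp
  let ?C1 = "rotate x1 ?C0"
  have C1_nth: "?C1 ! s = ?C0 ! ((x1 + s) mod n)" if "s < n" for s using that by (simp add: nth_rotate)
  have mod_lt: "(x1 + s) mod n < n" for s using length_ge_4 by simp
  have u_pos: "s \<le> d - x1" if "s < n" "E u (?C1 ! s)" for s
  proof -
    have "x1 \<le> (x1 + s) mod n" "(x1 + s) mod n \<le> d"
      using x1_min u_le mod_lt that C1_nth by auto
    then show ?thesis using add_mod_if[OF x1(1) that(1)] that(1) by (auto split: if_splits)
  qed
  have v_pos: "d - x1 \<le> s" if "s < n" "E v (?C1 ! s)" for s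
  proof -
    have "d \<le> (x1 + s) mod n \<or> (x1 + s) mod n = 0" using v_ge mod_lt that C1_nth by auto
    moreover have "x1 + s \<noteq> 0"
    proof
      assume "x1 + s = 0"
      then have "E u (?C0 ! 0)" "E v (?C0 ! 0)" using x1 that C1_nth by auto
      then show False using not_common in_C length_ge_4 by auto
    qed
    ultimately show ?thesis using add_mod_if[OF x1(1) that(1)] x1_d d_lt that(1) by (auto split: if_splits)
  qed
  have "E u (?C1 ! 0)" using x1 C1_nth[of 0] length_ge_4 by simp
  moreover have "s < t" if "s < n" "t < n" "E u (?C1 ! s)" "E v (?C1 ! t)" for s t
  proof -
    have "s \<noteq> t" using not_common[OF in_C[of s "x1 + i"]] that by (auto simp: rotate_rotate)
    then show ?thesis using u_pos v_pos that by fastforce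
  qed
  ultimately show ?thesis by (metis rotate_rotate)
qed

lemma normal_position:
  assumes sep: "\<forall>s<n. \<forall>t<n. E u (C ! s) \<longrightarrow> E v (C ! t) \<longrightarrow> s < t"
    and u_0: "E u (C!0)" and v_nbr: "nbrs E (set C) v \<noteq> {}"
  obtains x2 y1 y2 where "x2 < y1" "y1 \<le> y2" "y2 < n"
    "\<forall>t<n. E u (C!t) \<longrightarrow> t \<le> x2" "E u (C!x2)"
    "\<forall>t<n. E v (C!t) \<longrightarrow> y1 \<le> t \<and> t \<le> y2" "E v (C!y1)" "E v (C!y2)"
proof -
  define U where "U = {t. t < n \<and> E u (C!t)}"
  define Y where "Y = {t. t < n \<and> E v (C!t)}"
  have fin: "finite U" "finite Y" unfolding U_def Y_def by simp_all
  have "0 \<in> U" using u_0 length_ge_4 unfolding U_def by simp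
  then have "U \<noteq> {}" by blast
  moreover have "Y \<noteq> {}" using v_nbr unfolding Y_def nbrs_def by (auto simp: in_set_conv_nth)
  ultimately have x2: "Max U \<in> U" and y1: "Min Y \<in> Y" and y2: "Max Y \<in> Y" using fin by simp_all
  show ?thesis
  proof
    show "Max U < Min Y" using sep x2 y1 unfolding U_def Y_def by blast
    show "Min Y \<le> Max Y" "Max Y < n" using fin y1 y2 unfolding Y_def by auto
    show "\<forall>t<n. E u (C!t) \<longrightarrow> t \<le> Max U" "\<forall>t<n. E v (C!t) \<longrightarrow> Min Y \<le> t \<and> t \<le> Max Y"
      using fin unfolding U_def Y_def by auto
  qed (use x2 y1 y2 in \<open>auto simp: U_def Y_def\<close>)
qed

end

lemma strictly_nested_ends_adjacent_pendants:
  assumes inC: "in_C V E" and hole: "is_hole V E H"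
    and P_path: "is_path V E P" "length P \<ge> 2" "hd P = u" "last P = v" "set P \<inter> set H = {}"
    and nbr: "nbrs E (set H) u \<noteq> {}" "nbrs E (set H) v \<noteq> {}"
    and nest: "nested E H u v"
    and interior: "\<forall>i. 0 < i \<and> i < length P - 1 \<longrightarrow> nbrs E (set H) (P ! i) = {}"
    and disj: "nbrs E (set H) u \<inter> nbrs E (set H) v = {}"
  shows "\<exists>a b. nbrs E (set H) u = {a} \<and> nbrs E (set H) v = {b} \<and> E a b"
proof -
  have graph: "graph V E" using inC unfolding in_C_def by blast
  interpret graph_hole V E H by unfold_locales (rule graph, rule hole)
  obtain i j where "i < n" "j < n" "i \<noteq> j"
    "nbrs E (set H) u \<subseteq> arc H i j" "nbrs E (set H) v \<subseteq> arc H j i"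
    using nest unfolding nested_def by blast
  then obtain r where r: "E u (rotate r H ! 0)"
    "\<forall>s<n. \<forall>t<n. E u (rotate r H ! s) \<longrightarrow> E v (rotate r H ! t) \<longrightarrow> s < t"
    using separating_rotation nbr disj by blast
  define C where "C = rotate r H"
  interpret rot: graph_hole V E C unfolding C_def by unfold_locales (rule graph, rule is_hole_rotate[OF hole])
  have setC: "set C = set H" and lenC: "length C = n" unfolding C_def by simp_all
  have u_first: "E u (C!0)" using r(1) unfolding C_def .
  have sep: "\<forall>s<length C. \<forall>t<length C. E u (C!s) \<longrightarrow> E v (C!t) \<longrightarrow> s < t"
    using r(2) lenC unfolding C_def by simp
  have v_nbr: "nbrs E (set C) v \<noteq> {}" using nbr(2) setC by simp
  obtain x2 y1 y2 where order: "x2 < y1" "y1 \<le> y2" "y2 < length C"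
    and u_range: "\<forall>t<length C. E u (C!t) \<longrightarrow> t \<le> x2" "E u (C!x2)"
    and v_range: "\<forall>t<length C. E v (C!t) \<longrightarrow> y1 \<le> t \<and> t \<le> y2" "E v (C!y1)" "E v (C!y2)"
    by (rule rot.normal_position[OF sep u_first v_nbr])
  have "\<forall>q\<in>set P. q \<noteq> u \<longrightarrow> q \<noteq> v \<longrightarrow> (\<forall>w\<in>set C. \<not> E q w)"
  proof (intro ballI impI)
    fix q w assume q: "q \<in> set P" "q \<noteq> u" "q \<noteq> v" and w: "w \<in> set C"
    obtain k where k: "k < length P" "q = P ! k" using q(1) by (metis in_set_conv_nth)
    then have "k \<noteq> 0" "k \<noteq> length P - 1" using q P_path is_path_not_Nil[OF P_path(1)] by (auto simp: hd_conv_nth last_conv_nth)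
    then have "nbrs E (set H) (P ! k) = {}" using interior k by auto
    then show "\<not> E q w" using w k setC unfolding nbrs_def by auto
  qed
  then interpret attachment V E C P u v x2 y1 y2
    using P_path order u_first u_range v_range setC by unfold_locales simp_all
  have pend: "x2 = 0" "y1 = y2" and adj: "E (C!0) (C!y1)" using adjacent_pendants inC by blast+
  have "{t. t < length C \<and> E u (C!t)} = {0}" using u_range(1) u_first pend(1) order by auto
  moreover have "{t. t < length C \<and> E v (C!t)} = {y1}"
    using v_range order pend(2) by auto
  ultimately show ?thesis using rot.nbrs_conv_nth[of u] rot.nbrs_conv_nth[of v] setC adj by auto
qed

theorem lemma2p9:
  fixes V :: "'a set" and E :: "'a \<Rightarrow> 'a \<Rightarrow> bool" and H P :: "'a list" and u v :: 'a
  assumes "in_C V E"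
    and "is_hole V E H"
    and "is_path V E P" and "length P \<ge> 2" and "hd P = u" and "last P = v"
    and "set P \<inter> set H = {}"
    and "nbrs E (set H) u \<noteq> {}" and "nbrs E (set H) v \<noteq> {}"
    and "nested E H u v"
    and "\<forall>i. 0 < i \<and> i < length P - 1 \<longrightarrow> nbrs E (set H) (P ! i) = {}"
  shows "(nbrs E (set H) u \<inter> nbrs E (set H) v \<noteq> {} \<or>
          (pendant E H u \<and> pendant E H v \<and>
           (\<exists>a b. nbrs E (set H) u = {a} \<and> nbrs E (set H) v = {b} \<and> E a b)))
       \<and> (strictly_nested E H u v \<longrightarrow>
          pendant E H u \<and> pendant E H v \<and>
           (\<exists>a b. nbrs E (set H) u = {a} \<and> nbrs E (set H) v = {b} \<and> E a b))"
proof -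
  have "u \<notin> set H" "v \<notin> set H" using assms(10) unfolding nested_def by blast+
  then have "pendant E H u \<and> pendant E H v \<and>
      (\<exists>a b. nbrs E (set H) u = {a} \<and> nbrs E (set H) v = {b} \<and> E a b)"
    if "nbrs E (set H) u \<inter> nbrs E (set H) v = {}"
    using strictly_nested_ends_adjacent_pendants[OF assms that] unfolding pendant_def by auto
  then show ?thesis unfolding strictly_nested_def by blast
qed

end
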